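(* Let $N\in\{12,24,60\}$ and let $\mathcal{R}\subset SO(3)$ be the rotation group of a Platonic polyhedron, with $|\mathcal{R}|=N$ and identity $I$. Let $Q>0$ and define, on the open set $\Omega=\mathbb{R}^3\setminus\Gamma$ where $\Gamma=\bigcup_{R\in\mathcal{R}\setminus\{I\}}\{x\in\mathbb{R}^3: Rx=x\}$ (the union of the rotation axes), $$V(x)=-\frac12\sum_{R\in\mathcal{R}\setminus\{I\}}\frac{1}{|(R-I)x|}+\frac{Q}{|x|}.$$ Fix $T>0$, an integer $M\ge 1$, a rotation $R_0\in SO(3)$, and set $\tau=T/M$. Let $u_0\in C^2([0,\tau],\Omega)$ be a solution of the Euler–Lagrange equation $\ddot u_0=\nabla V(u_0)$ of the Lagrangian $L(x,\dot x)=\frac12|\dot x|^2+V(x)$, and let $H(t)=\nabla^2V(u_0(t))$ (the Hessian of $V$ along $u_0$). Consider the quadratic functional (second variation) $$\delta^2\bar{\mathcal{A}}(v)=\int_0^{\tau}\big(|\dot v(t)|^2+v(t)\cdot H(t)v(t)\big)\,dt$$ on the class of functions $v\in C^1([0,\tau],\mathbb{R}^3)$ satisfying $v(\tau)=R_0v(0)$. Let $(Y_0,Z_0)$ and $(Y_\tau,Z_\tau)$ be the solutions of the matrix Jacobi system $\dot Y=Z$, $\dot Z=H(t)Y$ (with $Y,Z:[0,\tau]\to\mathbb{R}^{3\times3}$) determined by $Y_0(0)=0,\ Z_0(0)=\mathrm{Id}$ and by $Y_\tau(\tau)=0,\ Z_\tau(\tau)=-\mathrm{Id}$, respectively, and put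 $W_0=Z_0Y_0^{-1}$, $W_\tau=Z_\tau Y_\tau^{-1}$ wherever the inverses exist. Then $\delta^2\bar{\mathcal{A}}(v)>0$ for every nonzero admissible $v$ if and only if both of the following hold: (i) (strengthened Jacobi condition) $\det Y_0(t)\neq 0$ for all $t\in(0,\tau]$; (ii) the $3\times3$ matrix $$-W_{\tau}(0)-Y_0^{-1}(\tau)R_0-R_0^{T}\big(Y_0^{-1}(\tau)\big)^{T}+R_0^{T}W_0(\tau)R_0$$ is positive definite, i.e. $\beta^T(\cdot)\beta>0$ for all nonzero $\beta\in\mathbb{R}^3$.
   Context: This is the criterion for the restricted action functional $\bar{\mathcal{A}}(u)=\int_0^{T/M}\big(\frac12|\dot u|^2+V(u)\big)dt$ of one "generating" electron (unit charge $-1$, unit mass, unit Coulomb constant, nucleus of charge $Q$ fixed at the origin, the other $N-1$ electrons at positions $Ru$, $R\in\mathcal{R}\setminus\{I\}$), defined on paths $u:[0,T/M]\to\mathbb{R}^3$ with $u(T/M)=R_0u(0)$. A point $c\in(0,\tau]$ is called conjugate to $0$ if some solution $(y,z)$ of $\dot y=z$, $\dot z=H(t)y$ with $y(0)=0$, $y\not\equiv0$, has $y(c)=0$; condition (i) is equivalent to the absence of conjugate points in $(0,\tau]$. The strengthened Legendre condition holds automatically since $\partial^2L/\partial\dot x^2=\mathrm{Id}$. *)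

theory Defs
  imports "HOL-Analysis.Analysis"
begin

definition SO3 :: "(real^3^3) set" where
  "SO3 = {A. orthogonal_matrix A \<and> det A = 1}"

definition golden :: real where "golden = (1 + sqrt 5) / 2"

definition signs :: "real set" where "signs = {-1, 1}"

definition tetrahedron_vertices :: "(real^3) set" where
  "tetrahedron_vertices =
     {vector [1,1,1], vector [1,-1,-1], vector [-1,1,-1], vector [-1,-1,1]}"

definition cube_vertices :: "(real^3) set" where
  "cube_vertices = {vector [a,b,c] | a b c. a \<in> signs \<and> b \<in> signs \<and> c \<in> signs}"

definition octahedron_vertices :: "(real^3) set" where
  "octahedron_vertices =
     {vector [a,0,0] | a. a \<in> signs} \<union> {vector [0,a,0] | a. a \<in> signs} \<union>
     {vector [0,0,a] | a. a \<in> signs}"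

definition icosahedron_vertices :: "(real^3) set" where
  "icosahedron_vertices =
     {vector [0, a, b * golden] | a b. a \<in> signs \<and> b \<in> signs} \<union>
     {vector [a, b * golden, 0] | a b. a \<in> signs \<and> b \<in> signs} \<union>
     {vector [b * golden, 0, a] | a b. a \<in> signs \<and> b \<in> signs}"

definition dodecahedron_vertices :: "(real^3) set" where
  "dodecahedron_vertices = cube_vertices \<union>
     {vector [0, a / golden, b * golden] | a b. a \<in> signs \<and> b \<in> signs} \<union>
     {vector [a / golden, b * golden, 0] | a b. a \<in> signs \<and> b \<in> signs} \<union>
     {vector [b * golden, 0, a / golden] | a b. a \<in> signs \<and> b \<in> signs}"

definition platonic_standard :: "(real^3) set set" where
  "platonic_standard = {tetrahedron_vertices, cube_vertices, octahedron_vertices,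
                        dodecahedron_vertices, icosahedron_vertices}"

definition platonic_vertex_set :: "(real^3) set \<Rightarrow> bool" where
  "platonic_vertex_set P \<longleftrightarrow>
     (\<exists>P0 \<in> platonic_standard. \<exists>U \<in> SO3. \<exists>c::real. c > 0 \<and>
        P = (\<lambda>v. c *\<^sub>R (U *v v)) ` P0)"

text \<open>Rotation group of a polyhedron: the rotations mapping it (equivalently its
  vertex set) onto itself.\<close>

definition rotation_group_of :: "(real^3) set \<Rightarrow> (real^3^3) set" where
  "rotation_group_of P = {A \<in> SO3. (\<lambda>v. A *v v) ` P = P}"

definition platonic_rotation_group :: "(real^3^3) set \<Rightarrow> bool" where
  "platonic_rotation_group G \<longleftrightarrow>
     (\<exists>P. platonic_vertex_set P \<and> G = rotation_group_of P)"

definition rot_axes :: "(real^3^3) set \<Rightarrow> (real^3) set" where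
  "rot_axes G = (\<Union>R \<in> G - {mat 1}. {x. R *v x = x})"

definition potential :: "(real^3^3) set \<Rightarrow> real \<Rightarrow> real^3 \<Rightarrow> real" where
  "potential G Q x =
     - (1/2) * (\<Sum>R \<in> G - {mat 1}. 1 / norm ((R - mat 1) *v x)) + Q / norm x"

definition pdiff :: "3 \<Rightarrow> (real^3 \<Rightarrow> real) \<Rightarrow> real^3 \<Rightarrow> real" where
  "pdiff i f x = deriv (\<lambda>s. f (x + s *\<^sub>R axis i 1)) 0"

definition grad :: "(real^3 \<Rightarrow> real) \<Rightarrow> real^3 \<Rightarrow> real^3" where
  "grad f x = (\<chi> i. pdiff i f x)"

definition hessian :: "(real^3 \<Rightarrow> real) \<Rightarrow> real^3 \<Rightarrow> real^3^3" where
  "hessian f x = (\<chi> i j. pdiff i (pdiff j f) x)"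

definition pos_def :: "real^3^3 \<Rightarrow> bool" where
  "pos_def A \<longleftrightarrow> (\<forall>\<beta>. \<beta> \<noteq> 0 \<longrightarrow> \<beta> \<bullet> (A *v \<beta>) > 0)"

end

(*
  For a Jacobi field (y' = z, z' = H y) the integrand of the second variation Q is the
  derivative of z . y. Writing an admissible v as the Jacobi field with boundary values
  b = v(0), R0 b plus a variation w with fixed ends gives Q(v) = b . M b + Q(w), M the matrix
  of (ii), since the cross term is a boundary term vanishing at both ends. If Y0 is
  nonsingular on (0,tau], the Legendre transformation w = Y0 c turns Q(w) into the integral
  of |w' - Z0 c|^2, which is positive unless w = 0; so (i) and (ii) suffice. Conversely (ii)
  is the positivity of Q on the boundary Jacobi fields, and a conjugate point c yields a
  nonzero variation with fixed ends and Q <= 0: the Jacobi field itself if c = tau, and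
  otherwise the Jacobi field cut off at c, its corner smoothed at a cost small compared with
  what is gained by pushing the cut-off field in the direction of its slope at c.
*)

theory Submission
  imports Defs
begin

section \<open>Inverse matrices\<close>

lemma matrix_inv_right_left:
  fixes A :: "real^'n^'n"
  assumes "det A \<noteq> 0"
  shows matrix_inv_right: "A ** matrix_inv A = mat 1"
    and matrix_inv_left: "matrix_inv A ** A = mat 1"
proof -
  have "\<exists>A'. A ** A' = mat 1 \<and> A' ** A = mat 1"
    using assms invertible_det_nz by (auto simp: invertible_def)
  then have "A ** matrix_inv A = mat 1 \<and> matrix_inv A ** A = mat 1"
    unfolding matrix_inv_def by (rule someI_ex)
  then show "A ** matrix_inv A = mat 1" "matrix_inv A ** A = mat 1" by auto
qed

lemma matrix_inv_cancel:
  fixes A :: "real^'n^'n"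
  assumes "det A \<noteq> 0"
  shows "A *v (matrix_inv A *v y) = y" "matrix_inv A *v (A *v y) = y"
  using matrix_inv_right_left[OF assms] by (simp_all add: matrix_vector_mul_assoc)

lemma det_nonzero_iff_kernel_zero:
  fixes A :: "real^'n^'n"
  shows "det A \<noteq> 0 \<longleftrightarrow> (\<forall>x. A *v x = 0 \<longrightarrow> x = 0)"
proof
  show "\<forall>x. A *v x = 0 \<longrightarrow> x = 0" if "det A \<noteq> 0"
    using matrix_inv_cancel(2)[OF that] by (metis matrix_vector_mult_0_right)
next
  assume ker: "\<forall>x. A *v x = 0 \<longrightarrow> x = 0"
  have "inj ((*v) A)"
  proof (rule injI)
    fix x z assume "A *v x = A *v z"
    then have "A *v (x - z) = 0" by (simp add: matrix_vector_mult_diff_distrib)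
    then show "x = z" using ker by (metis right_minus_eq)
  qed
  then show "det A \<noteq> 0"
    by (metis det_nz_iff_inj matrix_vector_mul_linear matrix_of_matrix_vector_mul)
qed

lemma matrix_inv_eqI:
  fixes A :: "real^'n^'n"
  assumes "det A \<noteq> 0" "A *v x = z"
  shows "x = matrix_inv A *v z"
  using matrix_inv_cancel(2)[OF assms(1), of x] assms(2) by simp

lemma matrix_inv_transpose:
  fixes A :: "real^'n^'n"
  assumes "det A \<noteq> 0"
  shows "matrix_inv (transpose A) = transpose (matrix_inv A)"
proof -
  have d: "det (transpose A) \<noteq> 0" using assms by (simp add: det_transpose)
  have "transpose A ** transpose (matrix_inv A) = mat 1"
    using matrix_inv_left[OF assms] by (metis matrix_transpose_mul transpose_mat)
  then have "matrix_inv (transpose A) ** (transpose A ** transpose (matrix_inv A)) = matrix_inv (transpose A)"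
    by simp
  then show ?thesis using matrix_inv_left[OF d] by (simp add: matrix_mul_assoc)
qed

lemma matrix_inv_mat_1: "matrix_inv (mat 1 :: real^'n^'n) = mat 1"
  using matrix_inv_left[of "mat 1 :: real^'n^'n"] by simp

lemma matrix_vector_mult_uminus: "(- A) *v x = - (A *v x)"
  for A :: "real^'n^'m"
  by (simp add: matrix_vector_mult_def vec_eq_iff sum_negf)

lemma inner_transpose_matrix_vector: "x \<bullet> (transpose A *v y) = (A *v x) \<bullet> y"
  for A :: "real^'n^'n"
  by (metis dot_lmul_matrix inner_commute transpose_matrix_vector)

lemma bounded_bilinear_matrix_vector_mult: "bounded_bilinear (\<lambda>(A::real^'n^'m) x. A *v x)"
proof -
  have "bilinear (\<lambda>(A::real^'n^'m) x. A *v x)"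
    unfolding bilinear_def
    by (auto intro!: linearI simp: matrix_vector_mult_add_rdistrib matrix_vector_right_distrib
        scaleR_matrix_vector_assoc matrix_vector_mult_scaleR)
  then show ?thesis by (simp add: bilinear_conv_bounded_bilinear)
qed

lemma bounded_linear_matrix_vector_mult_left: "bounded_linear (\<lambda>A::real^'n^'m. A *v x)"
  using bounded_bilinear.bounded_linear_left[OF bounded_bilinear_matrix_vector_mult] .

lemma matrix_lower_bound_perturb:
  fixes A B :: "real^'n^'n"
  assumes lowA: "\<And>x. norm x \<le> k * norm (A *v x)" and k: "k > 0"
    and small: "\<And>x. norm ((B - A) *v x) \<le> norm x / (2 * k)"
  shows "norm x \<le> 2 * k * norm (B *v x)"
proof -
  have "A *v x = B *v x - (B - A) *v x" by (simp add: matrix_vector_mult_diff_rdistrib)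
  then have "norm (A *v x) \<le> norm (B *v x) + norm ((B - A) *v x)"
    by (metis norm_triangle_ineq4)
  with small have "norm (A *v x) \<le> norm (B *v x) + norm x / (2 * k)"
    by (meson add_left_mono order_trans)
  then have "k * norm (A *v x) \<le> k * (norm (B *v x) + norm x / (2 * k))"
    using k by (intro mult_left_mono) auto
  then have "norm x \<le> k * norm (B *v x) + norm x / 2"
    using lowA[of x] k by (simp add: algebra_simps)
  then show ?thesis by simp
qed

lemma nonsingular_near:
  fixes A :: "real^'n^'n"
  assumes "det A \<noteq> 0"
  obtains m C where "m > 0"
    "\<And>B y. norm (B - A) < m \<Longrightarrow> det B \<noteq> 0 \<and> norm (matrix_inv B *v y) \<le> C * norm y"
proof -
  obtain K where K: "K > 0" "\<And>(B::real^'n^'n) x. norm (B *v x) \<le> norm B * norm x * K"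
    using bounded_bilinear.pos_bounded[OF bounded_bilinear_matrix_vector_mult] by auto
  define k where "k = norm (matrix_inv A) * K + 1"
  have k: "k > 0" unfolding k_def using K(1) by (simp add: add_nonneg_pos)
  have lowA: "norm x \<le> k * norm (A *v x)" for x
  proof -
    have "norm x = norm (matrix_inv A *v (A *v x))" by (simp add: matrix_inv_cancel[OF assms])
    also have "\<dots> \<le> norm (matrix_inv A) * K * norm (A *v x)"
      using K(2)[of "matrix_inv A" "A *v x"] by (simp add: mult_ac)
    also have "\<dots> \<le> k * norm (A *v x)" by (simp add: k_def mult_right_mono)
    finally show ?thesis .
  qed
  define m where "m = 1 / (2 * k * K)"
  have m: "m > 0" using k K by (simp add: m_def)
  show ?thesis
  proof (rule that[OF m])
    fix B :: "real^'n^'n" and y assume B: "norm (B - A) < m"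
    have "norm ((B - A) *v x) \<le> norm x / (2 * k)" for x
    proof -
      have "norm ((B - A) *v x) \<le> norm (B - A) * norm x * K" by (rule K(2))
      also have "\<dots> \<le> m * norm x * K" using B K(1) by (intro mult_right_mono) auto
      finally show ?thesis using K(1) by (simp add: m_def)
    qed
    note lowB = matrix_lower_bound_perturb[OF lowA k this]
    have dB: "det B \<noteq> 0"
      unfolding det_nonzero_iff_kernel_zero using lowB by (metis mult_zero_right norm_le_zero_iff norm_zero)
    moreover have "norm (matrix_inv B *v y) \<le> 2 * k * norm y"
      using lowB[of "matrix_inv B *v y"] matrix_inv_cancel(1)[OF dB] by simp
    ultimately show "det B \<noteq> 0 \<and> norm (matrix_inv B *v y) \<le> 2 * k * norm y" by simp
  qed
qed

lemma tendsto_matrix_inv_mult: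
  fixes Y :: "'b \<Rightarrow> real^'n^'n"
  assumes Y: "(Y \<longlongrightarrow> A) F" and dA: "det A \<noteq> 0" and f: "(f \<longlongrightarrow> q) F"
  shows "((\<lambda>s. matrix_inv (Y s) *v f s) \<longlongrightarrow> matrix_inv A *v q) F"
proof -
  obtain m C where m: "m > 0"
    and mC: "\<And>B y. norm (B - A) < m \<Longrightarrow> det B \<noteq> 0 \<and> norm (matrix_inv B *v y) \<le> C * norm y"
    using nonsingular_near[OF dA] by blast
  define p where "p = matrix_inv A *v q"
  have "((\<lambda>s. f s - Y s *v p) \<longlongrightarrow> q - A *v p) F"
    by (intro tendsto_intros f bounded_linear.tendsto[OF bounded_linear_matrix_vector_mult_left Y])
  then have "((\<lambda>s. C * norm (f s - Y s *v p)) \<longlongrightarrow> 0) F"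
    by (simp add: p_def matrix_inv_cancel[OF dA] tendsto_mult_right_zero tendsto_norm_zero)
  moreover have "\<forall>\<^sub>F s in F. norm (matrix_inv (Y s) *v f s - p) \<le> C * norm (f s - Y s *v p)"
  proof (rule eventually_mono)
    show "\<forall>\<^sub>F s in F. norm (Y s - A) < m"
      using Y m by (simp add: tendsto_iff dist_norm)
  next
    fix s assume "norm (Y s - A) < m"
    then have "det (Y s) \<noteq> 0" and "norm (matrix_inv (Y s) *v (f s - Y s *v p)) \<le> C * norm (f s - Y s *v p)"
      using mC by blast+
    then show "norm (matrix_inv (Y s) *v f s - p) \<le> C * norm (f s - Y s *v p)"
      by (simp add: matrix_vector_mult_diff_distrib matrix_inv_cancel)
  qed
  ultimately have "((\<lambda>s. matrix_inv (Y s) *v f s - p) \<longlongrightarrow> 0) F"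
    by (rule Lim_null_comparison[rotated])
  then show ?thesis by (simp add: p_def LIM_zero_iff)
qed

section \<open>Vector derivatives\<close>

lemma has_vector_derivative_iff_difference_quotient:
  fixes f :: "real \<Rightarrow> 'a::real_normed_vector"
  shows "(f has_vector_derivative f') (at x within S) \<longleftrightarrow>
    ((\<lambda>y. (f y - f x) /\<^sub>R (y - x)) \<longlongrightarrow> f') (at x within S)"
proof -
  have "\<forall>\<^sub>F y in at x within S. norm ((1 / norm (y - x)) *\<^sub>R (f y - (f x + (y - x) *\<^sub>R f')))
        = norm ((f y - f x) /\<^sub>R (y - x) - f')"
  proof (rule eventually_mono[OF eventually_at_filter[THEN iffD2]])
    fix y :: real assume "y \<noteq> x"
    then have "(1 / (y - x)) *\<^sub>R (f y - (f x + (y - x) *\<^sub>R f'))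
        = (1 / (y - x)) *\<^sub>R (f y - f x) - ((1 / (y - x)) * (y - x)) *\<^sub>R f'"
      by (simp add: scaleR_diff_right scaleR_add_right)
    also have "\<dots> = (f y - f x) /\<^sub>R (y - x) - f'" using \<open>y \<noteq> x\<close> by (simp add: divide_inverse)
    finally have "(f y - f x) /\<^sub>R (y - x) - f' = (1 / (y - x)) *\<^sub>R (f y - (f x + (y - x) *\<^sub>R f'))"
      by simp
    then show "norm ((1 / norm (y - x)) *\<^sub>R (f y - (f x + (y - x) *\<^sub>R f')))
        = norm ((f y - f x) /\<^sub>R (y - x) - f')"
      by (simp add: abs_div)
  qed simp
  note eq = this
  have "(f has_vector_derivative f') (at x within S) \<longleftrightarrow>
      ((\<lambda>y. (1 / norm (y - x)) *\<^sub>R (f y - (f x + (y - x) *\<^sub>R f'))) \<longlongrightarrow> 0) (at x within S)"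
    unfolding has_vector_derivative_def has_derivative_within using bounded_linear_scaleR_left by blast
  also have "\<dots> \<longleftrightarrow> ((\<lambda>y. norm ((1 / norm (y - x)) *\<^sub>R (f y - (f x + (y - x) *\<^sub>R f')))) \<longlongrightarrow> 0)
      (at x within S)"
    by (simp only: tendsto_norm_zero_iff)
  also have "\<dots> \<longleftrightarrow> ((\<lambda>y. norm ((f y - f x) /\<^sub>R (y - x) - f')) \<longlongrightarrow> 0) (at x within S)"
    by (rule tendsto_cong[OF eq])
  also have "\<dots> \<longleftrightarrow> ((\<lambda>y. (f y - f x) /\<^sub>R (y - x)) \<longlongrightarrow> f') (at x within S)"
    by (simp add: tendsto_norm_zero_iff LIM_zero_iff)
  finally show ?thesis .
qed

lemma has_vector_derivative_matrix_vector_mult: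
  fixes A :: "real \<Rightarrow> real^'n^'m"
  assumes "(A has_vector_derivative A') (at t within S)" "(x has_vector_derivative x') (at t within S)"
  shows "((\<lambda>s. A s *v x s) has_vector_derivative (A t *v x' + A' *v x t)) (at t within S)"
  using bounded_bilinear.has_vector_derivative[OF bounded_bilinear_matrix_vector_mult assms] by simp

lemma has_vector_derivative_inner:
  assumes "(f has_vector_derivative f') (at t within S)" "(g has_vector_derivative g') (at t within S)"
  shows "((\<lambda>s. f s \<bullet> g s) has_vector_derivative (f t \<bullet> g' + f' \<bullet> g t)) (at t within S)"
  using bounded_bilinear.has_vector_derivative[OF bounded_bilinear_inner assms] by simp

lemma has_vector_derivative_scaleR_const:
  "(f has_real_derivative f') (at t within S) \<Longrightarrow> ((\<lambda>s. f s *\<^sub>R p) has_vector_derivative f' *\<^sub>R p) (at t within S)"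
  using has_vector_derivative_scaleR[OF _ has_vector_derivative_const] by simp

lemma has_vector_derivative_matrix_inv_mult:
  fixes Y :: "real \<Rightarrow> real^'n^'n"
  assumes Y: "(Y has_vector_derivative Y') (at t within S)"
    and w: "(w has_vector_derivative w') (at t within S)"
    and nonsing: "\<forall>\<^sub>F s in at t within S. det (Y s) \<noteq> 0" and dt: "det (Y t) \<noteq> 0"
  shows "((\<lambda>s. matrix_inv (Y s) *v w s) has_vector_derivative
           matrix_inv (Y t) *v (w' - Y' *v (matrix_inv (Y t) *v w t))) (at t within S)"
proof -
  define c where "c s = matrix_inv (Y s) *v w s" for s
  define r where "r s = (w s - w t - (Y s - Y t) *v c t) /\<^sub>R (s - t)" for s
  have "((\<lambda>s. (w s - w t) /\<^sub>R (s - t) - ((Y s - Y t) /\<^sub>R (s - t)) *v c t) \<longlongrightarrow> w' - Y' *v c t)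
      (at t within S)"
    using Y w unfolding has_vector_derivative_iff_difference_quotient
    by (intro tendsto_intros bounded_linear.tendsto[OF bounded_linear_matrix_vector_mult_left])
  moreover have "(w s - w t) /\<^sub>R (s - t) - ((Y s - Y t) /\<^sub>R (s - t)) *v c t = r s" for s
    by (simp add: r_def scaleR_matrix_vector_assoc scaleR_diff_right)
  ultimately have r: "(r \<longlongrightarrow> w' - Y' *v c t) (at t within S)" by simp
  have "(Y \<longlongrightarrow> Y t) (at t within S)"
    using Y has_vector_derivative_continuous continuous_within by blast
  then have "((\<lambda>s. matrix_inv (Y s) *v r s) \<longlongrightarrow> matrix_inv (Y t) *v (w' - Y' *v c t)) (at t within S)"
    by (rule tendsto_matrix_inv_mult[OF _ dt r])
  moreover have "\<forall>\<^sub>F s in at t within S. matrix_inv (Y s) *v r s = (c s - c t) /\<^sub>R (s - t)"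
  proof (rule eventually_mono[OF nonsing])
    fix s assume ds: "det (Y s) \<noteq> 0"
    have "matrix_inv (Y s) *v (w s - w t - (Y s - Y t) *v c t) = c s - c t"
      using matrix_inv_cancel(1)[OF dt, of "w t"]
      by (simp add: c_def matrix_vector_mult_diff_distrib matrix_vector_mult_diff_rdistrib
          matrix_inv_cancel[OF ds])
    then show "matrix_inv (Y s) *v r s = (c s - c t) /\<^sub>R (s - t)"
      by (simp add: r_def matrix_vector_mult_scaleR)
  qed
  ultimately have "((\<lambda>s. (c s - c t) /\<^sub>R (s - t)) \<longlongrightarrow> matrix_inv (Y t) *v (w' - Y' *v c t)) (at t within S)"
    by (rule Lim_transform_eventually)
  then show ?thesis
    unfolding c_def[symmetric] has_vector_derivative_iff_difference_quotient by (simp add: c_def)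
qed

lemma has_vector_derivative_glue:
  fixes f g :: "real \<Rightarrow> 'a::real_normed_vector"
  assumes mb: "a \<le> m" "m < b" and x: "x \<in> {a..b}"
    and f: "\<And>y. y \<in> {a..m} \<Longrightarrow> (f has_vector_derivative f' y) (at y within {a..m})"
    and g: "\<And>y. y \<in> {m..b} \<Longrightarrow> (g has_vector_derivative g' y) (at y within {m..b})"
    and match: "f m = g m" "f' m = g' m"
  shows "((\<lambda>y. if y \<le> m then f y else g y) has_vector_derivative (if x \<le> m then f' x else g' x))
    (at x within {a..b})"
proof -
  have cS: "closure {a..m} = {a..m}" by simp
  have cT: "closure {m<..b} = {m..b}" using mb by (simp add: closure_greaterThanAtMost)
  have un: "{a..b} = {a..m} \<union> {m<..b}" using mb by auto
  have D: "((\<lambda>y. if y \<in> {a..m} then f y else g y) has_vector_derivative (if x \<in> {a..m} then f' x else g' x))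
      (at x within {a..b})"
  proof (rule has_vector_derivative_If_within_closures[OF _ un])
    show "x \<in> {a..m} \<union> {m<..b}" using x un by simp
    have eS: "{a..m} \<union> {a..m} \<inter> {m..b} = {a..m}" and eT: "{m<..b} \<union> {a..m} \<inter> {m..b} = {m..b}"
      using mb by auto
    show "(f has_vector_derivative f' x) (at x within {a..m} \<union> closure {a..m} \<inter> closure {m<..b})"
      if "x \<in> {a..m} \<union> closure {a..m} \<inter> closure {m<..b}"
      using that f unfolding cS cT eS by simp
    show "(g has_vector_derivative g' x) (at x within {m<..b} \<union> closure {a..m} \<inter> closure {m<..b})"
      if "x \<in> {m<..b} \<union> closure {a..m} \<inter> closure {m<..b}"
      using that g unfolding cS cT eT by simp
  qed (use match cT in auto)
  have "(if y \<le> m then f y else g y) = (if y \<in> {a..m} then f y else g y)" if "y \<in> {a..b}" for y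
    using that by auto
  moreover have "(if x \<in> {a..m} then f' x else g' x) = (if x \<le> m then f' x else g' x)" using x by auto
  ultimately show ?thesis
    using has_vector_derivative_transform[OF x _ D] by simp
qed

section \<open>Smoothness of the potential\<close>

lemma has_derivative_norm_matrix_vector_mult:
  fixes A :: "real^'n^'m"
  assumes "A *v x \<noteq> 0"
  shows "((\<lambda>y. norm (A *v y)) has_derivative (\<lambda>h. ((A *v x) \<bullet> (A *v h)) / norm (A *v x))) (at x)"
proof -
  have lin: "((\<lambda>y. A *v y) has_derivative (\<lambda>h. A *v h)) (at x)"
    by (simp add: bounded_linear_imp_has_derivative)
  have "((\<lambda>y. norm (A *v y)) has_derivative (\<lambda>h. sgn (A *v x) \<bullet> (A *v h))) (at x)"
    using has_derivative_compose[OF lin has_derivative_norm[OF assms]]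
    by (simp add: o_def inner_commute)
  then show ?thesis by (simp add: sgn_div_norm divide_inverse mult.commute)
qed

lemma has_derivative_inverse_norm_matrix_vector_mult:
  fixes A :: "real^'n^'m"
  assumes "A *v x \<noteq> 0"
  shows "((\<lambda>y. 1 / norm (A *v y)) has_derivative
     (\<lambda>h. - ((A *v x) \<bullet> (A *v h)) / norm (A *v x) ^ 3)) (at x)"
  using has_derivative_norm_matrix_vector_mult[OF assms] assms
  by (auto intro!: derivative_eq_intros simp: field_simps power3_eq_cube)

lemma has_derivative_inverse_norm_partial:
  fixes A :: "real^'n^'m"
  assumes "A *v x \<noteq> 0"
  shows "((\<lambda>y. - ((A *v y) \<bullet> b) / norm (A *v y) ^ 3) has_derivative
     (\<lambda>h. - ((A *v h) \<bullet> b) / norm (A *v x) ^ 3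
          + 3 * ((A *v x) \<bullet> b) * ((A *v x) \<bullet> (A *v h)) / norm (A *v x) ^ 5)) (at x)"
  using has_derivative_norm_matrix_vector_mult[OF assms] assms
    bounded_linear_imp_has_derivative[OF matrix_vector_mul_bounded_linear, of A]
  by (auto intro!: derivative_eq_intros simp: field_simps power3_eq_cube eval_nat_numeral)

lemma pdiff_eq_derivative:
  assumes "(f has_derivative D) (at x)"
  shows "pdiff i f x = D (axis i 1)"
proof -
  have l: "((\<lambda>s::real. x + s *\<^sub>R axis i 1) has_derivative (\<lambda>s. s *\<^sub>R axis i 1)) (at 0)"
    by (auto intro!: derivative_eq_intros)
  have "((\<lambda>s. f (x + s *\<^sub>R axis i 1)) has_derivative (\<lambda>s. D (s *\<^sub>R axis i 1))) (at 0)"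
    using has_derivative_compose[OF l, of f D] assms by (simp add: o_def)
  moreover have "bounded_linear D" using assms has_derivative_bounded_linear by blast
  ultimately have "((\<lambda>s. f (x + s *\<^sub>R axis i 1)) has_derivative (\<lambda>s. s * D (axis i 1))) (at 0)"
    by (simp add: linear_simps)
  then have "((\<lambda>s. f (x + s *\<^sub>R axis i 1)) has_field_derivative D (axis i 1)) (at 0)"
    unfolding has_field_derivative_def by (rule has_derivative_eq_rhs) (auto simp: mult.commute)
  then show ?thesis unfolding pdiff_def by (rule DERIV_imp_deriv)
qed

definition inverse_norm_partial :: "real^3^3 \<Rightarrow> 3 \<Rightarrow> real^3 \<Rightarrow> real" where
  "inverse_norm_partial A j y = - ((A *v y) \<bullet> (A *v axis j 1)) / norm (A *v y) ^ 3"

definition inverse_norm_second_partial :: "real^3^3 \<Rightarrow> 3 \<Rightarrow> 3 \<Rightarrow> real^3 \<Rightarrow> real" where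
  "inverse_norm_second_partial A i j x =
     - ((A *v axis i 1) \<bullet> (A *v axis j 1)) / norm (A *v x) ^ 3
     + 3 * ((A *v x) \<bullet> (A *v axis j 1)) * ((A *v x) \<bullet> (A *v axis i 1)) / norm (A *v x) ^ 5"

definition potential_domain :: "(real^3^3) set \<Rightarrow> (real^3) set" where
  "potential_domain G = {x. x \<noteq> 0 \<and> (\<forall>R \<in> G - {mat 1}. (R - mat 1) *v x \<noteq> 0)}"

definition potential_hessian :: "(real^3^3) set \<Rightarrow> real \<Rightarrow> real^3 \<Rightarrow> real^3^3" where
  "potential_hessian G Q x =
     (\<chi> i j. - (1/2) * (\<Sum>R \<in> G - {mat 1}. inverse_norm_second_partial (R - mat 1) i j x)
             + Q * inverse_norm_second_partial (mat 1) i j x)"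

text \<open>The nuclear term \<open>Q/|x|\<close> is written as \<open>Q/|I x|\<close> to treat it like the others.\<close>

lemma potential_eq: "potential G Q y =
    - (1/2) * (\<Sum>R \<in> G - {mat 1}. 1 / norm ((R - mat 1) *v y)) + Q * (1 / norm (mat 1 *v y))"
  by (simp add: potential_def)

lemma open_potential_domain:
  assumes "finite G"
  shows "open (potential_domain G)"
proof -
  have "potential_domain G = {x. x \<noteq> 0} \<inter> (\<Inter>R \<in> G - {mat 1}. {x. (R - mat 1) *v x \<noteq> 0})"
    by (auto simp: potential_domain_def)
  moreover have "open {x::real^3. x \<noteq> 0}"
    by (simp add: open_Collect_neq continuous_on_const continuous_on_id)
  moreover have "\<And>R. open {x::real^3. (R - mat 1) *v x \<noteq> 0}"
    by (rule open_Collect_neq) (auto intro!: continuous_intros)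
  ultimately show ?thesis using assms by (auto intro!: open_Int open_INT)
qed

lemma potential_domainD:
  assumes "x \<in> potential_domain G"
  shows "mat 1 *v x \<noteq> 0" "\<And>R. R \<in> G - {mat 1} \<Longrightarrow> (R - mat 1) *v x \<noteq> 0"
  using assms by (simp_all add: potential_domain_def)

lemma has_derivative_potential:
  assumes "finite G" "x \<in> potential_domain G"
  shows "(potential G Q has_derivative
     (\<lambda>h. - (1/2) * (\<Sum>R \<in> G - {mat 1}.
              - (((R - mat 1) *v x) \<bullet> ((R - mat 1) *v h)) / norm ((R - mat 1) *v x) ^ 3)
          + Q * (- ((mat 1 *v x) \<bullet> (mat 1 *v h)) / norm (mat 1 *v x) ^ 3))) (at x)"
  unfolding potential_eq[abs_def]
  by (intro has_derivative_add has_derivative_mult_right has_derivative_sum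
      has_derivative_inverse_norm_matrix_vector_mult potential_domainD[OF assms(2)])

lemma pdiff_potential:
  assumes "finite G" "x \<in> potential_domain G"
  shows "pdiff j (potential G Q) x =
    - (1/2) * (\<Sum>R \<in> G - {mat 1}. inverse_norm_partial (R - mat 1) j x)
    + Q * inverse_norm_partial (mat 1) j x"
  using pdiff_eq_derivative[OF has_derivative_potential[OF assms]] by (simp add: inverse_norm_partial_def)

lemma hessian_potential:
  assumes "finite G" "x \<in> potential_domain G"
  shows "hessian (potential G Q) x = potential_hessian G Q x"
proof -
  have d: "((pdiff j (potential G Q)) has_derivative
     (\<lambda>h. - (1/2) * (\<Sum>R \<in> G - {mat 1}.
            - (((R - mat 1) *v h) \<bullet> ((R - mat 1) *v axis j 1)) / norm ((R - mat 1) *v x) ^ 3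
            + 3 * (((R - mat 1) *v x) \<bullet> ((R - mat 1) *v axis j 1)) * (((R - mat 1) *v x) \<bullet> ((R - mat 1) *v h))
                / norm ((R - mat 1) *v x) ^ 5)
        + Q * (- ((mat 1 *v h) \<bullet> (mat 1 *v axis j 1)) / norm (mat 1 *v x) ^ 3
          + 3 * ((mat 1 *v x) \<bullet> (mat 1 *v axis j 1)) * ((mat 1 *v x) \<bullet> (mat 1 *v h))
              / norm (mat 1 *v x) ^ 5))) (at x)" for j
    apply (rule has_derivative_transform_within_open[OF _ open_potential_domain[OF assms(1)] assms(2),
          where f="\<lambda>y. - (1/2) * (\<Sum>R \<in> G - {mat 1}. inverse_norm_partial (R - mat 1) j y)
                      + Q * inverse_norm_partial (mat 1) j y"])
    unfolding inverse_norm_partial_def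
     apply (intro has_derivative_add has_derivative_mult_right has_derivative_sum
        has_derivative_inverse_norm_partial potential_domainD[OF assms(2)])
    by (auto simp: pdiff_potential[OF assms(1)] inverse_norm_partial_def)
  then show ?thesis
    unfolding hessian_def potential_hessian_def
    by (simp add: pdiff_eq_derivative[OF d] inverse_norm_second_partial_def)
qed

lemma potential_hessian_symmetric: "transpose (potential_hessian G Q x) = potential_hessian G Q x"
  unfolding potential_hessian_def transpose_def inverse_norm_second_partial_def
  by (rule vec_eq_iff[THEN iffD2]) (simp add: inner_commute mult.commute mult.left_commute)

lemma continuous_on_inverse_norm_second_partial:
  assumes "\<And>x. x \<in> S \<Longrightarrow> A *v x \<noteq> 0"
  shows "continuous_on S (inverse_norm_second_partial A i j)"
  unfolding inverse_norm_second_partial_def[abs_def] using assms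
  by (intro continuous_intros) auto

lemma continuous_on_potential_hessian:
  assumes "finite G"
  shows "continuous_on (potential_domain G) (potential_hessian G Q)"
  unfolding potential_hessian_def
  by (intro continuous_on_vec_lambda continuous_intros continuous_on_inverse_norm_second_partial)
    (auto dest: potential_domainD)

lemma potential_domain_if_off_axes:
  assumes "\<exists>R\<in>G. R \<noteq> mat 1" "x \<notin> rot_axes G"
  shows "x \<in> potential_domain G"
proof -
  have "(R - mat 1) *v x \<noteq> 0" if "R \<in> G - {mat 1}" for R
    using that assms(2) by (auto simp: rot_axes_def matrix_vector_mult_diff_rdistrib)
  moreover have "x \<noteq> 0"
    using assms by (auto simp: rot_axes_def)
  ultimately show ?thesis by (simp add: potential_domain_def)
qed

section \<open>Jacobi fields and the second variation\<close>

definition has_vderiv_on :: "(real \<Rightarrow> 'a::real_normed_vector) \<Rightarrow> (real \<Rightarrow> 'a) \<Rightarrow> real set \<Rightarrow> bool"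
    (infix "has'_vderiv'_on" 50) where
  "(f has_vderiv_on f') S \<longleftrightarrow> (\<forall>x\<in>S. (f has_vector_derivative f' x) (at x within S))"

lemma has_vderiv_on_continuous_on: "(f has_vderiv_on f') S \<Longrightarrow> continuous_on S f"
  unfolding has_vderiv_on_def continuous_on_eq_continuous_within
  using has_vector_derivative_continuous by blast

lemma has_vderiv_on_subset:
  "(f has_vderiv_on f') T \<Longrightarrow> S \<subseteq> T \<Longrightarrow> (f has_vderiv_on f') S"
  unfolding has_vderiv_on_def by (meson has_vector_derivative_within_subset subsetD)

lemma has_vderiv_on_add:
  "(f has_vderiv_on f') S \<Longrightarrow> (g has_vderiv_on g') S \<Longrightarrow>
    ((\<lambda>t. f t + g t) has_vderiv_on (\<lambda>t. f' t + g' t)) S"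
  unfolding has_vderiv_on_def by (auto intro: has_vector_derivative_add)

lemma has_vderiv_on_diff:
  "(f has_vderiv_on f') S \<Longrightarrow> (g has_vderiv_on g') S \<Longrightarrow>
    ((\<lambda>t. f t - g t) has_vderiv_on (\<lambda>t. f' t - g' t)) S"
  unfolding has_vderiv_on_def by (auto intro: has_vector_derivative_diff)

locale jacobi_system =
  fixes \<tau> :: real and H :: "real \<Rightarrow> real^'n^'n"
  assumes tau_pos: "\<tau> > 0"
    and continuous_H: "continuous_on {0..\<tau>} H"
    and symmetric_H: "\<And>t. t \<in> {0..\<tau>} \<Longrightarrow> transpose (H t) = H t"
begin

definition smooth_variation :: "(real \<Rightarrow> real^'n) \<Rightarrow> (real \<Rightarrow> real^'n) \<Rightarrow> bool" where
  "smooth_variation v v' \<longleftrightarrow> (v has_vderiv_on v') {0..\<tau>} \<and> continuous_on {0..\<tau>} v'"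

definition jacobi_field :: "(real \<Rightarrow> real^'n) \<Rightarrow> (real \<Rightarrow> real^'n) \<Rightarrow> bool" where
  "jacobi_field y z \<longleftrightarrow> (y has_vderiv_on z) {0..\<tau>} \<and> (z has_vderiv_on (\<lambda>t. H t *v y t)) {0..\<tau>}"

definition matrix_jacobi :: "(real \<Rightarrow> real^'n^'n) \<Rightarrow> (real \<Rightarrow> real^'n^'n) \<Rightarrow> bool" where
  "matrix_jacobi Y Z \<longleftrightarrow> (Y has_vderiv_on Z) {0..\<tau>} \<and> (Z has_vderiv_on (\<lambda>t. H t ** Y t)) {0..\<tau>}"

definition second_variation :: "real \<Rightarrow> real \<Rightarrow> (real \<Rightarrow> real^'n) \<Rightarrow> (real \<Rightarrow> real^'n) \<Rightarrow> real" where
  "second_variation a b v v' = integral {a..b} (\<lambda>t. (norm (v' t))\<^sup>2 + v t \<bullet> (H t *v v t))"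

lemma jacobi_field_smooth: "jacobi_field y z \<Longrightarrow> smooth_variation y z"
  unfolding jacobi_field_def smooth_variation_def using has_vderiv_on_continuous_on by blast

lemma smooth_variation_continuous_on: "smooth_variation v v' \<Longrightarrow> continuous_on {0..\<tau>} v"
  unfolding smooth_variation_def using has_vderiv_on_continuous_on by blast

lemma inner_H_commute: "t \<in> {0..\<tau>} \<Longrightarrow> (H t *v x) \<bullet> y = x \<bullet> (H t *v y)"
  by (metis symmetric_H dot_lmul_matrix inner_commute transpose_matrix_vector)

lemma continuous_on_H_mult: "continuous_on S y \<Longrightarrow> S \<subseteq> {0..\<tau>} \<Longrightarrow> continuous_on S (\<lambda>t. H t *v y t)"
  using bounded_bilinear.continuous_on[OF bounded_bilinear_matrix_vector_mult, of S H y]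
    continuous_on_subset[OF continuous_H] by simp

lemma integrable_second_variation:
  assumes "smooth_variation v v'" "{a..b} \<subseteq> {0..\<tau>}"
  shows "(\<lambda>t. (norm (v' t))\<^sup>2 + v t \<bullet> (H t *v v t)) integrable_on {a..b}"
proof -
  have "continuous_on {a..b} v" "continuous_on {a..b} v'"
    using assms continuous_on_subset smooth_variation_continuous_on
    unfolding smooth_variation_def by blast+
  then show ?thesis
    using assms(2) by (intro integrable_continuous_interval continuous_intros continuous_on_H_mult)
qed

lemma second_variation_combine:
  assumes "smooth_variation v v'" "0 \<le> c" "c \<le> \<tau>"
  shows "second_variation 0 \<tau> v v' = second_variation 0 c v v' + second_variation c \<tau> v v'"
  unfolding second_variation_def
  using Henstock_Kurzweil_Integration.integral_combine[OF _ _ integrable_second_variation[OF assms(1)]]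
    assms(2,3) by simp

lemma jacobi_field_matrix_column:
  assumes "matrix_jacobi Y Z"
  shows "jacobi_field (\<lambda>t. Y t *v x) (\<lambda>t. Z t *v x)"
proof -
  have "((\<lambda>s. A s *v x) has_vector_derivative A' *v x) (at t within {0..\<tau>})"
    if "(A has_vector_derivative A') (at t within {0..\<tau>})" for A :: "real \<Rightarrow> real^'n^'n" and A' t
    using bounded_linear.has_vector_derivative[OF bounded_linear_matrix_vector_mult_left that] by simp
  then show ?thesis
    using assms unfolding jacobi_field_def matrix_jacobi_def has_vderiv_on_def
    by (simp add: matrix_vector_mul_assoc)
qed

lemma jacobi_field_add:
  "jacobi_field y1 z1 \<Longrightarrow> jacobi_field y2 z2 \<Longrightarrow> jacobi_field (\<lambda>t. y1 t + y2 t) (\<lambda>t. z1 t + z2 t)"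
  unfolding jacobi_field_def by (auto intro!: has_vderiv_on_add simp: matrix_vector_right_distrib)

text \<open>The Wronskian (Lagrange bracket) of two Jacobi fields is constant because \<open>H\<close> is symmetric.\<close>

lemma jacobi_field_wronskian:
  assumes j1: "jacobi_field y1 z1" and j2: "jacobi_field y2 z2" and t: "t \<in> {0..\<tau>}"
  shows "y1 t \<bullet> z2 t - z1 t \<bullet> y2 t = y1 0 \<bullet> z2 0 - z1 0 \<bullet> y2 0"
proof -
  define W where "W s = y1 s \<bullet> z2 s - z1 s \<bullet> y2 s" for s
  have "(W has_vector_derivative 0) (at s within {0..t})" if s: "s \<in> {0..t}" for s
  proof -
    have st: "s \<in> {0..\<tau>}" "{0..t} \<subseteq> {0..\<tau>}" using s t by auto
    have "(y1 has_vderiv_on z1) {0..t}" "(z1 has_vderiv_on (\<lambda>t. H t *v y1 t)) {0..t}"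
      "(y2 has_vderiv_on z2) {0..t}" "(z2 has_vderiv_on (\<lambda>t. H t *v y2 t)) {0..t}"
      using j1 j2 has_vderiv_on_subset[OF _ st(2)] unfolding jacobi_field_def by blast+
    then have "(W has_vector_derivative
        (y1 s \<bullet> (H s *v y2 s) + z1 s \<bullet> z2 s - (z1 s \<bullet> z2 s + (H s *v y1 s) \<bullet> y2 s))) (at s within {0..t})"
      unfolding W_def has_vderiv_on_def using s
      by (intro has_vector_derivative_diff has_vector_derivative_inner) auto
    then show ?thesis using inner_H_commute[OF st(1)] by simp
  qed
  then have "((\<lambda>s. 0) has_integral (W t - W 0)) {0..t}"
    using t by (intro fundamental_theorem_of_calculus) auto
  then have "W t - W 0 = 0" using has_integral_0 has_integral_unique by blast
  then show ?thesis by (simp add: W_def)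
qed

lemma jacobi_field_integration_by_parts:
  assumes j: "jacobi_field y z" and g: "(g has_vderiv_on g') {0..\<tau>}" and ab: "0 \<le> a" "a \<le> b" "b \<le> \<tau>"
  shows "((\<lambda>t. z t \<bullet> g' t + g t \<bullet> (H t *v y t)) has_integral (z b \<bullet> g b - z a \<bullet> g a)) {a..b}"
proof (rule fundamental_theorem_of_calculus[OF ab(2)])
  fix s assume s: "s \<in> {a..b}"
  have "{a..b} \<subseteq> {0..\<tau>}" using ab by auto
  then have "(z has_vderiv_on (\<lambda>t. H t *v y t)) {a..b}" "(g has_vderiv_on g') {a..b}"
    using j g has_vderiv_on_subset unfolding jacobi_field_def by blast+
  then have "((\<lambda>s. z s \<bullet> g s) has_vector_derivative (z s \<bullet> g' s + (H s *v y s) \<bullet> g s)) (at s within {a..b})"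
    using s unfolding has_vderiv_on_def by (intro has_vector_derivative_inner) auto
  then show "((\<lambda>s. z s \<bullet> g s) has_vector_derivative (z s \<bullet> g' s + g s \<bullet> (H s *v y s))) (at s within {a..b})"
    by (simp add: inner_commute)
qed

lemma second_variation_jacobi_field:
  assumes j: "jacobi_field y z" and ab: "0 \<le> a" "a \<le> b" "b \<le> \<tau>"
  shows "second_variation a b y z = z b \<bullet> y b - z a \<bullet> y a"
  using jacobi_field_integration_by_parts[OF j _ ab] j
  unfolding second_variation_def jacobi_field_def
  by (simp add: power2_norm_eq_inner integral_unique)

lemma second_variation_add_jacobi_field:
  assumes j: "jacobi_field y z" and w: "smooth_variation w w'" and ab: "0 \<le> a" "a \<le> b" "b \<le> \<tau>"
  shows "second_variation a b (\<lambda>t. y t + w t) (\<lambda>t. z t + w' t)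
    = second_variation a b y z + 2 * (z b \<bullet> w b - z a \<bullet> w a) + second_variation a b w w'"
proof -
  have sub: "{a..b} \<subseteq> {0..\<tau>}" using ab by auto
  have i1: "((\<lambda>t. (norm (z t))\<^sup>2 + y t \<bullet> (H t *v y t)) has_integral second_variation a b y z) {a..b}"
    unfolding second_variation_def
    by (intro integrable_integral integrable_second_variation jacobi_field_smooth j sub)
  have i2: "((\<lambda>t. (norm (w' t))\<^sup>2 + w t \<bullet> (H t *v w t)) has_integral second_variation a b w w') {a..b}"
    unfolding second_variation_def by (intro integrable_integral integrable_second_variation w sub)
  have i3: "((\<lambda>t. 2 * (z t \<bullet> w' t + w t \<bullet> (H t *v y t))) has_integral 2 * (z b \<bullet> w b - z a \<bullet> w a)) {a..b}"
    using w unfolding smooth_variation_def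
    by (intro has_integral_mult_right jacobi_field_integration_by_parts[OF j _ ab]) auto
  have expand: "(norm (z t + w' t))\<^sup>2 + (y t + w t) \<bullet> (H t *v (y t + w t)) =
      ((norm (z t))\<^sup>2 + y t \<bullet> (H t *v y t)) + 2 * (z t \<bullet> w' t + w t \<bullet> (H t *v y t))
      + ((norm (w' t))\<^sup>2 + w t \<bullet> (H t *v w t))" if "t \<in> {a..b}" for t
  proof -
    have "y t \<bullet> (H t *v w t) = w t \<bullet> (H t *v y t)"
      using inner_H_commute[of t "w t" "y t"] that sub by (auto simp: inner_commute)
    then show ?thesis
      by (simp add: power2_norm_eq_inner inner_add_left inner_add_right matrix_vector_right_distrib
          inner_commute[of "w' t" "z t"])
  qed
  have "((\<lambda>t. (norm (z t + w' t))\<^sup>2 + (y t + w t) \<bullet> (H t *v (y t + w t))) has_integral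
      (second_variation a b y z + 2 * (z b \<bullet> w b - z a \<bullet> w a) + second_variation a b w w')) {a..b}"
    by (rule has_integral_eq[OF _ has_integral_add[OF has_integral_add[OF i1 i3] i2]]) (simp add: expand)
  then show ?thesis unfolding second_variation_def by (rule integral_unique)
qed

end

lemma jacobi_system_hessian_potential:
  assumes "\<tau> > 0" and G: "finite G" "\<exists>R\<in>G. R \<noteq> mat 1"
    and u: "continuous_on {0..\<tau>} u" "\<forall>t\<in>{0..\<tau>}. u t \<notin> rot_axes G"
  shows "jacobi_system \<tau> (\<lambda>t. hessian (potential G Q) (u t))"
proof
  have dom: "u t \<in> potential_domain G" if "t \<in> {0..\<tau>}" for t
    using potential_domain_if_off_axes[OF G(2)] u(2) that by blast
  have "continuous_on {0..\<tau>} (\<lambda>t. potential_hessian G Q (u t))"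
    by (rule continuous_on_compose2[OF continuous_on_potential_hessian[OF G(1)] u(1)]) (use dom in auto)
  then show "continuous_on {0..\<tau>} (\<lambda>t. hessian (potential G Q) (u t))"
    by (rule continuous_on_eq) (simp add: hessian_potential[OF G(1) dom])
  show "transpose (hessian (potential G Q) (u t)) = hessian (potential G Q) (u t)" if "t \<in> {0..\<tau>}" for t
    by (simp add: hessian_potential[OF G(1) dom[OF that]] potential_hessian_symmetric)
qed (rule assms(1))

section \<open>Legendre transformation: sufficiency of the Jacobi condition\<close>

locale jacobi_frame = jacobi_system \<tau> H for \<tau> :: real and H :: "real \<Rightarrow> real^'n^'n" +
  fixes Y Z :: "real \<Rightarrow> real^'n^'n"
  assumes frame_jacobi: "matrix_jacobi Y Z"
    and frame_init: "Y 0 = 0" "Z 0 = mat 1"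
begin

lemma frame_column: "jacobi_field (\<lambda>t. Y t *v x) (\<lambda>t. Z t *v x)"
  by (rule jacobi_field_matrix_column[OF frame_jacobi])

lemma frame_has_vderiv_on: "(Y has_vderiv_on Z) {0..\<tau>}" "(Z has_vderiv_on (\<lambda>t. H t ** Y t)) {0..\<tau>}"
  using frame_jacobi by (simp_all add: matrix_jacobi_def)

lemma continuous_on_frame: "continuous_on {0..\<tau>} Y" "continuous_on {0..\<tau>} Z"
  using frame_has_vderiv_on has_vderiv_on_continuous_on by blast+

text \<open>\<open>Y\<^sup>T Z\<close> is symmetric: its Wronskian vanishes at \<open>t = 0\<close>.\<close>

lemma frame_symmetric:
  assumes "t \<in> {0..\<tau>}"
  shows "(Y t *v x) \<bullet> (Z t *v y) = (Z t *v x) \<bullet> (Y t *v y)"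
  using jacobi_field_wronskian[OF frame_column frame_column assms] frame_init by simp

end

locale legendre_transform = jacobi_frame \<tau> H Y Z
    for \<tau> :: real and H Y Z :: "real \<Rightarrow> real^'n^'n" +
  fixes w w' :: "real \<Rightarrow> real^'n"
  assumes nonsingular: "\<And>t. t \<in> {0<..\<tau>} \<Longrightarrow> det (Y t) \<noteq> 0"
    and smooth_w: "smooth_variation w w'"
    and w_ends: "w 0 = 0" "w \<tau> = 0"
begin

text \<open>Coordinates of \<open>w\<close> in the frame, \<open>w = Y c\<close>, and the defect \<open>w' - Z c\<close>
  whose square is the transformed integrand.\<close>

definition coords :: "real \<Rightarrow> real^'n" where
  "coords t = matrix_inv (Y t) *v w t"

definition defect :: "real \<Rightarrow> real^'n" where
  "defect t = w' t - Z t *v coords t"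

definition boundary_term :: "real \<Rightarrow> real" where
  "boundary_term t = w t \<bullet> (Z t *v coords t)"

lemma w_has_vderiv_on: "(w has_vderiv_on w') {0..\<tau>}"
  using smooth_w by (simp add: smooth_variation_def)

lemma frame_coords: "t \<in> {0<..\<tau>} \<Longrightarrow> Y t *v coords t = w t"
  using nonsingular by (simp add: coords_def matrix_inv_cancel)

lemma eventually_in_greaterThanAtMost:
  assumes "t \<in> {0<..\<tau>}"
  shows "\<forall>\<^sub>F s in at t within {0..\<tau>}. s \<in> {0<..\<tau>}"
proof -
  have "\<exists>d>0. \<forall>x\<in>{0..\<tau>}. 0 < dist x t \<and> dist x t < d \<longrightarrow> x \<in> {0<..\<tau>}"
    using assms by (intro exI[of _ t]) (auto simp: dist_real_def)
  then show ?thesis by (simp add: eventually_at)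
qed

lemma has_vector_derivative_coords:
  assumes t: "t \<in> {0<..\<tau>}"
  shows "(coords has_vector_derivative matrix_inv (Y t) *v defect t) (at t within {0..\<tau>})"
proof -
  have "t \<in> {0..\<tau>}" using t by auto
  then show ?thesis
    unfolding coords_def[abs_def] defect_def
    using frame_has_vderiv_on(1) w_has_vderiv_on nonsingular t
    by (intro has_vector_derivative_matrix_inv_mult eventually_mono[OF eventually_in_greaterThanAtMost[OF t]])
      (auto simp: has_vderiv_on_def)
qed

lemma continuous_on_defect:
  assumes e: "e \<in> {0<..\<tau>}"
  shows "continuous_on {e..\<tau>} defect"
proof -
  have "continuous_on {e..\<tau>} coords"
    unfolding continuous_on_eq_continuous_within
  proof
    fix t assume "t \<in> {e..\<tau>}"
    then have "t \<in> {0<..\<tau>}" "{e..\<tau>} \<subseteq> {0..\<tau>}" using e by auto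
    then show "continuous (at t within {e..\<tau>}) coords"
      by (intro continuous_within_subset[OF has_vector_derivative_continuous[OF has_vector_derivative_coords]])
  qed
  moreover have "continuous_on {e..\<tau>} w'" "continuous_on {e..\<tau>} Z"
    using smooth_w continuous_on_frame(2) e
    by (auto simp: smooth_variation_def elim: continuous_on_subset)
  ultimately show ?thesis unfolding defect_def[abs_def]
    by (intro continuous_intros bounded_bilinear.continuous_on[OF bounded_bilinear_matrix_vector_mult])
qed

lemma integrable_defect: "e \<in> {0<..\<tau>} \<Longrightarrow> (\<lambda>t. (norm (defect t))\<^sup>2) integrable_on {e..\<tau>}"
  by (intro integrable_continuous_interval continuous_intros continuous_on_defect)

lemma legendre_identity:
  assumes t: "t \<in> {0<..\<tau>}"
  shows "(boundary_term has_vector_derivative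
           ((norm (w' t))\<^sup>2 + w t \<bullet> (H t *v w t)) - (norm (defect t))\<^sup>2) (at t within {0..\<tau>})"
proof -
  have t': "t \<in> {0..\<tau>}" using t by auto
  define c' where "c' = matrix_inv (Y t) *v defect t"
  have "(boundary_term has_vector_derivative
      w t \<bullet> (Z t *v c' + (H t ** Y t) *v coords t) + w' t \<bullet> (Z t *v coords t)) (at t within {0..\<tau>})"
    unfolding boundary_term_def[abs_def] c'_def
    using t' w_has_vderiv_on frame_has_vderiv_on(2) has_vector_derivative_coords[OF t]
    by (intro has_vector_derivative_inner has_vector_derivative_matrix_vector_mult)
      (auto simp: has_vderiv_on_def)
  moreover have "w t \<bullet> (Z t *v c' + (H t ** Y t) *v coords t) + w' t \<bullet> (Z t *v coords t)
      = (norm (w' t))\<^sup>2 + w t \<bullet> (H t *v w t) - (norm (defect t))\<^sup>2"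
  proof -
    define P where "P = defect t"
    define V where "V = Z t *v coords t"
    have w': "w' t = P + V" by (simp add: P_def V_def defect_def)
    have "Y t *v c' = P" using nonsingular[OF t] by (simp add: c'_def P_def matrix_inv_cancel)
    then have s: "w t \<bullet> (Z t *v c') = V \<bullet> P"
      using frame_symmetric[OF t', of "coords t" c'] frame_coords[OF t] by (simp add: V_def)
    have h: "w t \<bullet> ((H t ** Y t) *v coords t) = w t \<bullet> (H t *v w t)"
      using frame_coords[OF t] by (simp add: matrix_vector_mul_assoc[symmetric])
    show ?thesis
      using s h by (simp add: w' inner_add_left inner_add_right power2_norm_eq_inner
          V_def[symmetric] P_def[symmetric] inner_commute[of P V])
  qed
  ultimately show ?thesis by simp
qed

lemma coords_tendsto_0: "(coords \<longlongrightarrow> w' 0) (at 0 within {0..\<tau>})"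
proof -
  have t0: "(0::real) \<in> {0..\<tau>}" using tau_pos by simp
  have q1: "((\<lambda>s. (w s - w 0) /\<^sub>R (s - 0)) \<longlongrightarrow> w' 0) (at 0 within {0..\<tau>})"
    using w_has_vderiv_on t0 has_vector_derivative_iff_difference_quotient
    unfolding has_vderiv_on_def by blast
  have q2: "((\<lambda>s. (Y s - Y 0) /\<^sub>R (s - 0)) \<longlongrightarrow> Z 0) (at 0 within {0..\<tau>})"
    using frame_has_vderiv_on(1) t0 has_vector_derivative_iff_difference_quotient
    unfolding has_vderiv_on_def by blast
  have "((\<lambda>s. matrix_inv ((Y s - Y 0) /\<^sub>R (s - 0)) *v ((w s - w 0) /\<^sub>R (s - 0))) \<longlongrightarrow> w' 0)
      (at 0 within {0..\<tau>})"
    using tendsto_matrix_inv_mult[OF q2 _ q1] frame_init by (simp add: matrix_inv_mat_1)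
  moreover have "\<forall>\<^sub>F s in at 0 within {0..\<tau>}.
      matrix_inv ((Y s - Y 0) /\<^sub>R (s - 0)) *v ((w s - w 0) /\<^sub>R (s - 0)) = coords s"
  proof (rule eventually_mono)
    show "\<forall>\<^sub>F s in at 0 within {0..\<tau>}. s \<in> {0<..\<tau>}" by (auto simp: eventually_at_filter)
  next
    fix s assume s: "s \<in> {0<..\<tau>}"
    have d: "det ((1/s) *\<^sub>R Y s) \<noteq> 0"
      using nonsingular[OF s] s by (simp add: det_nonzero_iff_kernel_zero scaleR_matrix_vector_assoc[symmetric])
    have "((1/s) *\<^sub>R Y s) *v coords s = (1/s) *\<^sub>R w s"
      using frame_coords[OF s] by (simp add: scaleR_matrix_vector_assoc[symmetric])
    from matrix_inv_eqI[OF d this]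
    show "matrix_inv ((Y s - Y 0) /\<^sub>R (s - 0)) *v ((w s - w 0) /\<^sub>R (s - 0)) = coords s"
      using frame_init w_ends by (simp add: divide_inverse)
  qed
  ultimately show ?thesis by (rule Lim_transform_eventually)
qed

lemma boundary_term_tendsto_0: "(boundary_term \<longlongrightarrow> 0) (at 0 within {0..\<tau>})"
proof -
  have t0: "(0::real) \<in> {0..\<tau>}" using tau_pos by simp
  have "(w \<longlongrightarrow> w 0) (at 0 within {0..\<tau>})" "(Z \<longlongrightarrow> Z 0) (at 0 within {0..\<tau>})"
    using continuous_on_frame(2) smooth_variation_continuous_on[OF smooth_w] t0
    by (simp_all add: continuous_on_def)
  then have "(boundary_term \<longlongrightarrow> w 0 \<bullet> (Z 0 *v w' 0)) (at 0 within {0..\<tau>})"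
    unfolding boundary_term_def[abs_def]
    by (intro tendsto_intros bounded_bilinear.tendsto[OF bounded_bilinear_matrix_vector_mult] coords_tendsto_0)
  then show ?thesis using w_ends by simp
qed

lemma integral_defect_tail:
  assumes e: "e \<in> {0<..\<tau>}"
  shows "integral {e..\<tau>} (\<lambda>t. (norm (defect t))\<^sup>2)
    = integral {e..\<tau>} (\<lambda>t. (norm (w' t))\<^sup>2 + w t \<bullet> (H t *v w t)) + boundary_term e"
proof -
  have "((\<lambda>t. (norm (w' t))\<^sup>2 + w t \<bullet> (H t *v w t) - (norm (defect t))\<^sup>2) has_integral
      (boundary_term \<tau> - boundary_term e)) {e..\<tau>}"
  proof (rule fundamental_theorem_of_calculus)
    fix x assume "x \<in> {e..\<tau>}"
    then have "x \<in> {0<..\<tau>}" "{e..\<tau>} \<subseteq> {0..\<tau>}" using e by auto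
    then show "(boundary_term has_vector_derivative
        (norm (w' x))\<^sup>2 + w x \<bullet> (H x *v w x) - (norm (defect x))\<^sup>2) (at x within {e..\<tau>})"
      by (intro has_vector_derivative_within_subset[OF legendre_identity])
  qed (use e in auto)
  then have "integral {e..\<tau>} (\<lambda>t. (norm (w' t))\<^sup>2 + w t \<bullet> (H t *v w t) - (norm (defect t))\<^sup>2)
      = - boundary_term e"
    by (simp add: integral_unique boundary_term_def w_ends)
  moreover have "(\<lambda>t. (norm (defect t))\<^sup>2) integrable_on {e..\<tau>}"
    by (rule integrable_defect[OF e])
  moreover have "(\<lambda>t. (norm (w' t))\<^sup>2 + w t \<bullet> (H t *v w t)) integrable_on {e..\<tau>}"
    using e by (intro integrable_second_variation[OF smooth_w]) auto
  ultimately show ?thesis by (simp add: integral_diff)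
qed

lemma tendsto_integral_defect:
  "((\<lambda>e. integral {e..\<tau>} (\<lambda>t. (norm (defect t))\<^sup>2)) \<longlongrightarrow> second_variation 0 \<tau> w w')
    (at 0 within {0..\<tau>})"
proof -
  have "((\<lambda>e. integral {e..\<tau>} (\<lambda>t. (norm (w' t))\<^sup>2 + w t \<bullet> (H t *v w t))) \<longlongrightarrow> second_variation 0 \<tau> w w')
      (at 0 within {0..\<tau>})"
    using indefinite_integral_continuous_1'[OF integrable_second_variation[OF smooth_w]] tau_pos
    by (simp add: continuous_on_def second_variation_def)
  then have "((\<lambda>e. integral {e..\<tau>} (\<lambda>t. (norm (w' t))\<^sup>2 + w t \<bullet> (H t *v w t)) + boundary_term e)
      \<longlongrightarrow> second_variation 0 \<tau> w w' + 0) (at 0 within {0..\<tau>})"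
    by (intro tendsto_add boundary_term_tendsto_0)
  moreover have "\<forall>\<^sub>F e in at 0 within {0..\<tau>}. e \<in> {0<..\<tau>}" by (auto simp: eventually_at_filter)
  ultimately show ?thesis
    by (auto elim!: Lim_transform_eventually eventually_mono simp: integral_defect_tail)
qed

lemma at_0_within_nontrivial: "at 0 within {0..\<tau>} \<noteq> (bot :: real filter)"
  using tau_pos by (simp add: at_within_Icc_at_right)

lemma second_variation_nonneg: "second_variation 0 \<tau> w w' \<ge> 0"
proof (rule tendsto_lowerbound[OF tendsto_integral_defect _ at_0_within_nontrivial])
  have "\<forall>\<^sub>F e in at 0 within {0..\<tau>}. e \<in> {0<..\<tau>}" by (auto simp: eventually_at_filter)
  then show "\<forall>\<^sub>F e in at 0 within {0..\<tau>}. 0 \<le> integral {e..\<tau>} (\<lambda>t. (norm (defect t))\<^sup>2)"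
    by (rule eventually_mono) (intro integral_nonneg integrable_defect, auto)
qed

lemma integral_defect_antimono:
  assumes s: "s \<in> {0<..\<tau>}" and e: "s \<le> e" "e \<le> \<tau>"
  shows "integral {e..\<tau>} (\<lambda>t. (norm (defect t))\<^sup>2) \<le> integral {s..\<tau>} (\<lambda>t. (norm (defect t))\<^sup>2)"
proof -
  have "integral {s..e} (\<lambda>t. (norm (defect t))\<^sup>2) + integral {e..\<tau>} (\<lambda>t. (norm (defect t))\<^sup>2)
      = integral {s..\<tau>} (\<lambda>t. (norm (defect t))\<^sup>2)"
    using e by (intro Henstock_Kurzweil_Integration.integral_combine[OF _ _ integrable_defect[OF s]]) auto
  moreover have "integral {s..e} (\<lambda>t. (norm (defect t))\<^sup>2) \<ge> 0"
    using e by (intro integral_nonneg integrable_on_subinterval[OF integrable_defect[OF s]]) auto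
  ultimately show ?thesis by simp
qed

lemma integral_defect_eq_0:
  assumes Q0: "second_variation 0 \<tau> w w' = 0" and e: "e \<in> {0<..\<tau>}"
  shows "integral {e..\<tau>} (\<lambda>t. (norm (defect t))\<^sup>2) = 0"
proof -
  have "\<forall>\<^sub>F s in at 0 within {0..\<tau>}. s \<in> {0<..\<tau>} \<and> s < e"
    using e tau_pos unfolding at_within_Icc_at_right[OF tau_pos] eventually_at_right_field
    by (intro exI[of _ e]) auto
  then have "\<forall>\<^sub>F s in at 0 within {0..\<tau>}.
      integral {e..\<tau>} (\<lambda>t. (norm (defect t))\<^sup>2) \<le> integral {s..\<tau>} (\<lambda>t. (norm (defect t))\<^sup>2)"
    by (rule eventually_mono) (use e in \<open>auto intro: integral_defect_antimono\<close>)
  then have "integral {e..\<tau>} (\<lambda>t. (norm (defect t))\<^sup>2) \<le> 0"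
    using tendsto_lowerbound[OF tendsto_integral_defect _ at_0_within_nontrivial] Q0 by simp
  moreover have "integral {e..\<tau>} (\<lambda>t. (norm (defect t))\<^sup>2) \<ge> 0"
    by (intro integral_nonneg integrable_defect e) simp
  ultimately show ?thesis by simp
qed

lemma defect_zero:
  assumes Q0: "second_variation 0 \<tau> w w' = 0" and t: "t \<in> {0<..\<tau>}"
  shows "defect t = 0"
proof -
  have e: "t/2 \<in> {0<..\<tau>}" using t by auto
  have cont: "continuous_on {t/2..\<tau>} (\<lambda>s. (norm (defect s))\<^sup>2)"
    by (intro continuous_intros continuous_on_defect e)
  have "(norm (defect t))\<^sup>2 = 0"
  proof (rule has_integral_0_cbox_imp_0[of "t/2" \<tau> "\<lambda>s. (norm (defect s))\<^sup>2"])
    show "continuous_on (cbox (t/2) \<tau>) (\<lambda>s. (norm (defect s))\<^sup>2)" using cont by simp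
    show "((\<lambda>s. (norm (defect s))\<^sup>2) has_integral 0) (cbox (t/2) \<tau>)"
      using integral_defect_eq_0[OF Q0 e] integrable_defect[OF e]
      by (metis box_real(2) has_integral_integral)
  qed (use t in auto)
  then show ?thesis by simp
qed

lemma zero_if_second_variation_zero:
  assumes Q0: "second_variation 0 \<tau> w w' = 0" and t: "t \<in> {0..\<tau>}"
  shows "w t = 0"
proof (cases "t = 0")
  case True
  then show ?thesis using w_ends by simp
next
  case False
  then have t': "t \<in> {0<..\<tau>}" using t by auto
  have "((\<lambda>s. 0) has_integral (coords \<tau> - coords t)) {t..\<tau>}"
  proof (rule has_integral_eq[OF _ fundamental_theorem_of_calculus[of t \<tau> coords]])
    fix x assume "x \<in> {t..\<tau>}"
    then have x: "x \<in> {0<..\<tau>}" "{t..\<tau>} \<subseteq> {0..\<tau>}" using t' by auto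
    show "matrix_inv (Y x) *v defect x = 0" using defect_zero[OF Q0 x(1)] by simp
    show "(coords has_vector_derivative matrix_inv (Y x) *v defect x) (at x within {t..\<tau>})"
      using has_vector_derivative_within_subset[OF has_vector_derivative_coords] x by blast
  qed (use t in auto)
  then have "coords t = coords \<tau>" using has_integral_0 has_integral_unique by fastforce
  then have "coords t = 0" by (simp add: coords_def w_ends)
  then show ?thesis using frame_coords[OF t'] by simp
qed

end

context jacobi_frame
begin

lemma second_variation_fixed_ends:
  assumes "\<forall>t\<in>{0<..\<tau>}. det (Y t) \<noteq> 0" "smooth_variation w w'" "w 0 = 0" "w \<tau> = 0"
  shows "second_variation 0 \<tau> w w' \<ge> 0"
    and "(\<exists>t\<in>{0..\<tau>}. w t \<noteq> 0) \<Longrightarrow> second_variation 0 \<tau> w w' > 0"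
proof -
  interpret legendre_transform \<tau> H Y Z w w'
    using assms by unfold_locales auto
  show "second_variation 0 \<tau> w w' \<ge> 0" by (rule second_variation_nonneg)
  then show "second_variation 0 \<tau> w w' > 0" if "\<exists>t\<in>{0..\<tau>}. w t \<noteq> 0"
    using that zero_if_second_variation_zero by force
qed

end

section \<open>Necessity of the Jacobi condition\<close>

text \<open>Subtracting \<open>corner_bump c d\<close> from a Jacobi field cut off at a conjugate point \<open>c\<close>
  removes its corner at an energy cost of order \<open>d\<close>.\<close>

definition corner_bump :: "real \<Rightarrow> real \<Rightarrow> real \<Rightarrow> real" where
  "corner_bump c d t = (if t \<le> c - d then 0 else - (c - t) * (1 - (c - t) / d)\<^sup>2)"

definition corner_bump' :: "real \<Rightarrow> real \<Rightarrow> real \<Rightarrow> real" where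
  "corner_bump' c d t =
     (if t \<le> c - d then 0 else (1 - (c - t) / d)\<^sup>2 - 2 * ((c - t) / d) * (1 - (c - t) / d))"

lemma corner_bump_at: "d > 0 \<Longrightarrow> corner_bump c d c = 0" "d > 0 \<Longrightarrow> corner_bump' c d c = 1"
  by (simp_all add: corner_bump_def corner_bump'_def)

lemma corner_bump_vanishes: "t \<le> c - d \<Longrightarrow> corner_bump c d t = 0 \<and> corner_bump' c d t = 0"
  by (simp add: corner_bump_def corner_bump'_def)

lemma has_real_derivative_corner_bump:
  assumes d: "d > 0" and ab: "a \<le> c - d" "c - d < b" and x: "x \<in> {a..b}"
  shows "(corner_bump c d has_real_derivative corner_bump' c d x) (at x within {a..b})"
proof -
  have "((\<lambda>t. - (c - t) * (1 - (c - t) / d)\<^sup>2) has_real_derivative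
      ((1 - (c - y) / d)\<^sup>2 - 2 * ((c - y) / d) * (1 - (c - y) / d))) (at y within S)" for y S
    using d by (auto intro!: derivative_eq_intros simp: power2_eq_square field_simps)
  then have "((\<lambda>y. if y \<le> c - d then 0 else - (c - y) * (1 - (c - y) / d)\<^sup>2) has_vector_derivative
      (if x \<le> c - d then 0
       else (1 - (c - x) / d)\<^sup>2 - 2 * ((c - x) / d) * (1 - (c - x) / d))) (at x within {a..b})"
    using d by (intro has_vector_derivative_glue[OF ab x])
      (auto simp: has_real_derivative_iff_has_vector_derivative)
  then show ?thesis
    unfolding corner_bump_def[abs_def] corner_bump'_def has_real_derivative_iff_has_vector_derivative .
qed

lemma continuous_corner_bump:
  assumes "d > 0"
  shows "continuous_on S (corner_bump c d)" "continuous_on S (corner_bump' c d)"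
proof -
  have univ: "{..c-d} \<union> {c-d..} = UNIV" by auto
  have "continuous_on ({..c-d} \<union> {c-d..}) (\<lambda>t. if t \<le> c - d then 0 else - (c - t) * (1 - (c - t) / d)\<^sup>2)"
    "continuous_on ({..c-d} \<union> {c-d..})
      (\<lambda>t. if t \<le> c - d then 0 else (1 - (c - t) / d)\<^sup>2 - 2 * ((c - t) / d) * (1 - (c - t) / d))"
    by (rule continuous_on_cases; use assms in \<open>auto intro!: continuous_intros\<close>)+
  then have "continuous_on UNIV (corner_bump c d)" "continuous_on UNIV (corner_bump' c d)"
    unfolding corner_bump_def[abs_def] corner_bump'_def[abs_def] univ by simp_all
  then show "continuous_on S (corner_bump c d)" "continuous_on S (corner_bump' c d)"
    by (auto elim: continuous_on_subset)
qed

lemma corner_bump_bounds: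
  assumes d: "d > 0" and t: "t \<le> c"
  shows "\<bar>corner_bump c d t\<bar> \<le> d" "\<bar>corner_bump' c d t\<bar> \<le> 1"
proof -
  define a where "a = (c - t) / d"
  have "\<bar>corner_bump c d t\<bar> \<le> d \<and> \<bar>corner_bump' c d t\<bar> \<le> 1" if "t > c - d"
  proof -
    have a: "0 \<le> a" "a \<le> 1" using that t d by (auto simp: a_def field_simps)
    have "\<bar>corner_bump c d t\<bar> = (c - t) * (1 - a)\<^sup>2"
      using that t by (simp add: corner_bump_def a_def abs_mult)
    also have "\<dots> \<le> (c - t) * 1" using a t by (intro mult_left_mono) (auto simp: power_le_one)
    finally have "\<bar>corner_bump c d t\<bar> \<le> d" using that by simp
    moreover have "corner_bump' c d t = 1 - 4 * a + 3 * a\<^sup>2"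
      using that by (simp add: corner_bump'_def a_def[symmetric] power2_eq_square algebra_simps)
    then have "\<bar>corner_bump' c d t\<bar> \<le> 1"
      using a mult_left_le[of a a] zero_le_power2[of "a - 2/3"]
      by (simp add: abs_le_iff power2_eq_square algebra_simps)
    ultimately show ?thesis ..
  qed
  moreover have "\<bar>corner_bump c d t\<bar> \<le> d \<and> \<bar>corner_bump' c d t\<bar> \<le> 1" if "t \<le> c - d"
    using corner_bump_vanishes[OF that] d by simp
  ultimately show "\<bar>corner_bump c d t\<bar> \<le> d" "\<bar>corner_bump' c d t\<bar> \<le> 1"
    by (meson not_le)+
qed

lemma integral_corner_bump_le:
  assumes d: "0 < d" "d \<le> 1" "d \<le> c" and K: "K \<ge> 0"
  shows "integral {0..c} (\<lambda>t. (corner_bump' c d t)\<^sup>2 + K * (corner_bump c d t)\<^sup>2) \<le> (1 + K) * d"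
proof -
  define B where "B = (\<lambda>t. (corner_bump' c d t)\<^sup>2 + K * (corner_bump c d t)\<^sup>2)"
  have iB: "B integrable_on {0..c}"
    unfolding B_def using d by (intro integrable_continuous_interval continuous_intros continuous_corner_bump)
  have "integral {0..c - d} B + integral {c - d..c} B = integral {0..c} B"
    using d by (intro Henstock_Kurzweil_Integration.integral_combine[OF _ _ iB]) auto
  moreover have "integral {0..c - d} B = integral {0..c - d} (\<lambda>_. 0)"
    by (rule integral_cong) (simp add: B_def corner_bump_vanishes)
  moreover have "integral {c - d..c} B \<le> integral {c - d..c} (\<lambda>t. 1 + K)"
  proof (rule integral_le)
    show "B integrable_on {c - d..c}" using d by (intro integrable_on_subinterval[OF iB]) auto
  next
    fix t assume "t \<in> {c - d..c}"
    then have "(corner_bump' c d t)\<^sup>2 \<le> 1" "(corner_bump c d t)\<^sup>2 \<le> 1"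
      using corner_bump_bounds[OF d(1), of t c] d(2) by (auto simp: abs_square_le_1)
    then show "B t \<le> 1 + K" unfolding B_def using K by (smt (verit) mult_left_le)
  qed auto
  ultimately have "integral {0..c} B \<le> (1 + K) * d" using d by (simp add: algebra_simps)
  then show ?thesis unfolding B_def .
qed

context jacobi_system
begin

lemma smooth_variation_glue:
  assumes c: "0 \<le> c" "c < \<tau>"
    and f: "(f has_vderiv_on f') {0..c}" "continuous_on {0..c} f'"
    and g: "(g has_vderiv_on g') {c..\<tau>}" "continuous_on {c..\<tau>} g'"
    and match: "f c = g c" "f' c = g' c"
  shows "smooth_variation (\<lambda>t. if t \<le> c then f t else g t) (\<lambda>t. if t \<le> c then f' t else g' t)"
  unfolding smooth_variation_def
proof
  show "((\<lambda>t. if t \<le> c then f t else g t) has_vderiv_on (\<lambda>t. if t \<le> c then f' t else g' t)) {0..\<tau>}"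
    unfolding has_vderiv_on_def
    using f(1) g(1) match by (intro ballI has_vector_derivative_glue[OF c]) (auto simp: has_vderiv_on_def)
  have "continuous_on ({0..c} \<union> {c..\<tau>}) (\<lambda>t. if t \<le> c then f' t else g' t)"
    by (rule continuous_on_cases[OF _ _ f(2) g(2)]) (use match in auto)
  moreover have "{0..c} \<union> {c..\<tau>} = {0..\<tau>}" using c by auto
  ultimately show "continuous_on {0..\<tau>} (\<lambda>t. if t \<le> c then f' t else g' t)" by simp
qed

lemma H_quadratic_bound:
  obtains K where "K \<ge> 0" "\<And>t x. t \<in> {0..\<tau>} \<Longrightarrow> x \<bullet> (H t *v x) \<le> K * (norm x)\<^sup>2"
proof -
  obtain K0 where K0: "K0 > 0" "\<And>(A::real^'n^'n) x. norm (A *v x) \<le> norm A * norm x * K0"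
    using bounded_bilinear.pos_bounded[OF bounded_bilinear_matrix_vector_mult] by auto
  have "compact (H ` {0..\<tau>})" by (rule compact_continuous_image[OF continuous_H compact_Icc])
  then obtain B where B: "\<And>t. t \<in> {0..\<tau>} \<Longrightarrow> norm (H t) \<le> B"
    using compact_imp_bounded bounded_iff by (metis image_eqI)
  show ?thesis
  proof (rule that[of "max B 0 * K0"])
    fix t x assume t: "t \<in> {0..\<tau>}"
    have "x \<bullet> (H t *v x) \<le> norm x * norm (H t *v x)" by (rule norm_cauchy_schwarz)
    also have "\<dots> \<le> norm x * (norm (H t) * norm x * K0)" by (intro mult_left_mono K0) simp
    also have "\<dots> \<le> norm x * (max B 0 * norm x * K0)"
      using B[OF t] K0(1) by (intro mult_left_mono mult_right_mono) auto
    finally show "x \<bullet> (H t *v x) \<le> max B 0 * K0 * (norm x)\<^sup>2"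
      by (simp add: power2_eq_square algebra_simps)
  qed (use K0 in simp)
qed

lemma second_variation_scaleR_le:
  assumes K: "\<And>t x. t \<in> {0..\<tau>} \<Longrightarrow> x \<bullet> (H t *v x) \<le> K * (norm x)\<^sup>2"
    and v: "smooth_variation v v'" and ab: "{a..b} \<subseteq> {0..\<tau>}"
    and phi: "\<And>t. t \<in> {a..b} \<Longrightarrow> v t = \<phi> t *\<^sub>R p \<and> v' t = \<phi>' t *\<^sub>R p"
    and int: "(\<lambda>t. (\<phi>' t)\<^sup>2 + K * (\<phi> t)\<^sup>2) integrable_on {a..b}"
  shows "second_variation a b v v' \<le> (norm p)\<^sup>2 * integral {a..b} (\<lambda>t. (\<phi>' t)\<^sup>2 + K * (\<phi> t)\<^sup>2)"
proof -
  have "second_variation a b v v' \<le> integral {a..b} (\<lambda>t. (norm p)\<^sup>2 * ((\<phi>' t)\<^sup>2 + K * (\<phi> t)\<^sup>2))"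
    unfolding second_variation_def
  proof (rule integral_le[OF integrable_second_variation[OF v ab]])
    show "(\<lambda>t. (norm p)\<^sup>2 * ((\<phi>' t)\<^sup>2 + K * (\<phi> t)\<^sup>2)) integrable_on {a..b}"
      using has_integral_mult_right[OF integrable_integral[OF int]] by blast
  next
    fix t assume t: "t \<in> {a..b}"
    have "(\<phi> t *\<^sub>R p) \<bullet> (H t *v (\<phi> t *\<^sub>R p)) = (\<phi> t)\<^sup>2 * (p \<bullet> (H t *v p))"
      by (simp add: matrix_vector_mult_scaleR power2_eq_square)
    also have "\<dots> \<le> (\<phi> t)\<^sup>2 * (K * (norm p)\<^sup>2)" using t ab by (intro mult_left_mono K) auto
    finally show "(norm (v' t))\<^sup>2 + v t \<bullet> (H t *v v t) \<le> (norm p)\<^sup>2 * ((\<phi>' t)\<^sup>2 + K * (\<phi> t)\<^sup>2)"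
      using phi[OF t] by (simp add: power_mult_distrib algebra_simps)
  qed
  then show ?thesis by simp
qed

lemma jacobi_field_nonzero_near_0:
  assumes u: "jacobi_field u uz" and u0: "u 0 = 0" and uz0: "uz 0 \<noteq> 0" and b: "0 < b" "b \<le> \<tau>"
  shows "\<exists>t\<in>{0..b}. u t \<noteq> 0"
proof (rule ccontr)
  assume "\<not> ?thesis"
  then have z: "\<And>t. t \<in> {0..b} \<Longrightarrow> u t = 0" by auto
  have 0: "(0::real) \<in> {0..b}" using b by simp
  have "(u has_vector_derivative uz 0) (at 0 within {0..b})"
    using u has_vderiv_on_subset[of u uz "{0..\<tau>}" "{0..b}"] b
    by (auto simp: jacobi_field_def has_vderiv_on_def)
  moreover have "(u has_vector_derivative 0) (at 0 within {0..b})"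
    by (rule has_vector_derivative_transform[OF 0 z has_vector_derivative_const])
  ultimately have "uz 0 = 0"
    using vector_derivative_unique_within_closed_interval[of 0 b 0 u] b by simp
  then show False using uz0 by simp
qed

end

text \<open>Cutting a Jacobi field \<open>u\<close> off at a conjugate point \<open>c < \<tau>\<close> gives a broken
  variation with vanishing second variation. Smoothing its corner by a bump of width \<open>d\<close>
  costs \<open>O(d)\<close>, while adding \<open>-\<lambda> \<phi> u'(c)\<close> for a profile \<open>\<phi>\<close> with \<open>\<phi>(c) = 1\<close> gains
  \<open>2\<lambda>|u'(c)|\<^sup>2 - O(\<lambda>\<^sup>2)\<close>. With \<open>\<lambda> = lam\<close> and \<open>d = width\<close> as chosen below, the total is at
  most \<open>-lam |u'(c)|\<^sup>2 / 2\<close>.\<close>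

locale conjugate_corner = jacobi_system \<tau> H for \<tau> :: real and H :: "real \<Rightarrow> real^'n^'n" +
  fixes u uz :: "real \<Rightarrow> real^'n" and c K :: real
  assumes jacobi_u: "jacobi_field u uz"
    and u_zeros: "u 0 = 0" "u c = 0"
    and c_between: "0 < c" "c < \<tau>"
    and corner: "uz c \<noteq> 0"
    and K: "K \<ge> 0" "\<And>t x. t \<in> {0..\<tau>} \<Longrightarrow> x \<bullet> (H t *v x) \<le> K * (norm x)\<^sup>2"
begin

definition rise :: "real \<Rightarrow> real" where "rise t = 2 * t / c - t\<^sup>2 / c\<^sup>2"
definition rise' :: "real \<Rightarrow> real" where "rise' t = 2 / c - 2 * t / c\<^sup>2"
definition fall :: "real \<Rightarrow> real" where "fall t = 1 - ((t - c) / (\<tau> - c))\<^sup>2"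
definition fall' :: "real \<Rightarrow> real" where "fall' t = - 2 * ((t - c) / (\<tau> - c)) / (\<tau> - c)"

definition rise_energy :: real where
  "rise_energy = integral {0..c} (\<lambda>t. (rise' t)\<^sup>2 + K * (rise t)\<^sup>2)"

definition fall_energy :: real where
  "fall_energy = integral {c..\<tau>} (\<lambda>t. (fall' t)\<^sup>2 + K * (fall t)\<^sup>2)"

definition lam :: real where "lam = 1 / (2 * rise_energy + fall_energy + 1)"

definition width :: real where "width = min (c / 2) (min 1 (lam / (4 * (1 + K))))"

definition left_profile :: "real \<Rightarrow> real" where
  "left_profile t = lam * rise t + corner_bump c width t"

definition left_profile' :: "real \<Rightarrow> real" where
  "left_profile' t = lam * rise' t + corner_bump' c width t"

definition v :: "real \<Rightarrow> real^'n" where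
  "v t = (if t \<le> c then u t - left_profile t *\<^sub>R uz c else - (lam * fall t) *\<^sub>R uz c)"

definition v' :: "real \<Rightarrow> real^'n" where
  "v' t = (if t \<le> c then uz t - left_profile' t *\<^sub>R uz c else - (lam * fall' t) *\<^sub>R uz c)"

lemma rise_values: "rise 0 = 0" "rise c = 1" "rise' c = 0"
  using c_between by (simp_all add: rise_def rise'_def power2_eq_square)

lemma fall_values: "fall c = 1" "fall' c = 0" "fall \<tau> = 0"
  using c_between by (simp_all add: fall_def fall'_def)

lemma has_real_derivative_rise_fall:
  "(rise has_real_derivative rise' t) (at t within S)" "(fall has_real_derivative fall' t) (at t within S)"
proof -
  have "((\<lambda>t. 1 - ((t - c) / e)\<^sup>2) has_real_derivative - 2 * ((t - c) / e) / e) (at t within S)"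
    if "e \<noteq> 0" for e
    using that by (auto intro!: derivative_eq_intros simp: field_simps power2_eq_square)
  from this[of "\<tau> - c"] c_between
  show "(fall has_real_derivative fall' t) (at t within S)"
    unfolding fall_def[abs_def] fall'_def by simp
  show "(rise has_real_derivative rise' t) (at t within S)"
    unfolding rise_def[abs_def] rise'_def using c_between
    by (auto intro!: derivative_eq_intros simp: field_simps power2_eq_square)
qed

lemma continuous_rise_fall:
  "continuous_on S rise" "continuous_on S rise'" "continuous_on S fall" "continuous_on S fall'"
  unfolding rise_def[abs_def] rise'_def[abs_def] fall_def[abs_def] fall'_def[abs_def]
  using c_between by (auto intro!: continuous_intros)

lemma energies_nonneg: "rise_energy \<ge> 0" "fall_energy \<ge> 0"
  unfolding rise_energy_def fall_energy_def using K(1) by (auto intro!: integral_nonneg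
      integrable_continuous_interval continuous_intros continuous_rise_fall)

lemma lam_pos: "lam > 0" and lam_energy: "lam * (2 * rise_energy + fall_energy) \<le> 1"
  using energies_nonneg by (simp_all add: lam_def field_simps)

lemma width_pos: "width > 0"
  and width_le: "width \<le> c / 2" "width \<le> 1" "(1 + K) * width \<le> lam / 4"
proof -
  show "width > 0" using c_between lam_pos K(1) by (simp add: width_def)
  show "width \<le> c / 2" unfolding width_def by (rule min.cobounded1)
  show "width \<le> 1" by (simp add: width_def min.coboundedI2)
  have "(1 + K) * width \<le> (1 + K) * (lam / (4 * (1 + K)))"
    using K(1) by (intro mult_left_mono) (simp_all add: width_def min.coboundedI2)
  also have "\<dots> = lam / 4" using K(1) by (simp add: field_simps)
  finally show "(1 + K) * width \<le> lam / 4" .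
qed

lemma has_real_derivative_left_profile:
  "t \<in> {0..\<tau>} \<Longrightarrow> (left_profile has_real_derivative left_profile' t) (at t within {0..\<tau>})"
  unfolding left_profile_def[abs_def] left_profile'_def
  using width_pos width_le c_between
  by (intro DERIV_add DERIV_cmult has_real_derivative_rise_fall has_real_derivative_corner_bump) auto

lemma continuous_left_profile': "continuous_on S left_profile'"
  unfolding left_profile'_def[abs_def] using width_pos
  by (intro continuous_intros continuous_rise_fall continuous_corner_bump)

lemma left_profile_values: "left_profile 0 = 0" "left_profile c = lam" "left_profile' c = 1"
  using rise_values corner_bump_at[OF width_pos] corner_bump_vanishes[of 0 c width] width_le c_between
  by (simp_all add: left_profile_def left_profile'_def)

lemma smooth_left_correction:
  "smooth_variation (\<lambda>t. - left_profile t *\<^sub>R uz c) (\<lambda>t. - left_profile' t *\<^sub>R uz c)"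
  unfolding smooth_variation_def has_vderiv_on_def
  by (intro conjI ballI has_vector_derivative_scaleR_const DERIV_minus has_real_derivative_left_profile
      continuous_intros continuous_left_profile')

lemma smooth_v: "smooth_variation v v'"
  unfolding v_def[abs_def] v'_def[abs_def]
proof (rule smooth_variation_glue)
  have sub: "{0..c} \<subseteq> {0..\<tau>}" using c_between by auto
  have "((\<lambda>t. u t + - left_profile t *\<^sub>R uz c) has_vderiv_on (\<lambda>t. uz t + - left_profile' t *\<^sub>R uz c)) {0..\<tau>}"
    using jacobi_u smooth_left_correction
    unfolding jacobi_field_def smooth_variation_def by (intro has_vderiv_on_add) auto
  then show "((\<lambda>t. u t - left_profile t *\<^sub>R uz c) has_vderiv_on (\<lambda>t. uz t - left_profile' t *\<^sub>R uz c)) {0..c}"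
    using has_vderiv_on_subset[OF _ sub] by simp
  have "continuous_on {0..\<tau>} (\<lambda>t. uz t - left_profile' t *\<^sub>R uz c)"
    using jacobi_field_smooth[OF jacobi_u] continuous_left_profile'
    unfolding smooth_variation_def by (intro continuous_intros) auto
  then show "continuous_on {0..c} (\<lambda>t. uz t - left_profile' t *\<^sub>R uz c)"
    using continuous_on_subset[OF _ sub] by blast
  show "((\<lambda>t. - (lam * fall t) *\<^sub>R uz c) has_vderiv_on (\<lambda>t. - (lam * fall' t) *\<^sub>R uz c)) {c..\<tau>}"
    unfolding has_vderiv_on_def
    by (intro ballI has_vector_derivative_scaleR_const DERIV_minus DERIV_cmult has_real_derivative_rise_fall)
  show "continuous_on {c..\<tau>} (\<lambda>t. - (lam * fall' t) *\<^sub>R uz c)"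
    by (intro continuous_intros continuous_rise_fall)
qed (use c_between u_zeros fall_values left_profile_values in auto)

lemma v_values: "v 0 = 0" "v \<tau> = 0" "v c = - lam *\<^sub>R uz c"
  using u_zeros c_between left_profile_values fall_values by (simp_all add: v_def)

lemma continuous_left_profile: "continuous_on {0..\<tau>} left_profile"
  unfolding continuous_on_eq_continuous_within
  using has_real_derivative_left_profile DERIV_continuous by blast

lemma left_profile_energy_pointwise:
  "(left_profile' t)\<^sup>2 + K * (left_profile t)\<^sup>2
    \<le> 2 * lam\<^sup>2 * ((rise' t)\<^sup>2 + K * (rise t)\<^sup>2)
      + 2 * ((corner_bump' c width t)\<^sup>2 + K * (corner_bump c width t)\<^sup>2)"
proof -
  have sq: "(a + b)\<^sup>2 \<le> 2 * a\<^sup>2 + 2 * b\<^sup>2" for a b :: real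
    using zero_le_power2[of "a - b"] by (simp add: power2_eq_square algebra_simps)
  have "(left_profile' t)\<^sup>2 \<le> 2 * lam\<^sup>2 * (rise' t)\<^sup>2 + 2 * (corner_bump' c width t)\<^sup>2"
    using sq[of "lam * rise' t" "corner_bump' c width t"] by (simp add: left_profile'_def power_mult_distrib)
  moreover have "(left_profile t)\<^sup>2 \<le> 2 * lam\<^sup>2 * (rise t)\<^sup>2 + 2 * (corner_bump c width t)\<^sup>2"
    using sq[of "lam * rise t" "corner_bump c width t"] by (simp add: left_profile_def power_mult_distrib)
  ultimately show ?thesis using mult_left_mono[OF _ K(1)] by (fastforce simp: algebra_simps)
qed

lemma left_profile_energy_le:
  "integral {0..c} (\<lambda>t. (left_profile' t)\<^sup>2 + K * (left_profile t)\<^sup>2)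
    \<le> 2 * lam\<^sup>2 * rise_energy + 2 * ((1 + K) * width)"
proof -
  define B where "B = (\<lambda>t. (corner_bump' c width t)\<^sup>2 + K * (corner_bump c width t)\<^sup>2)"
  have iR: "((\<lambda>t. (rise' t)\<^sup>2 + K * (rise t)\<^sup>2) has_integral rise_energy) {0..c}"
    unfolding rise_energy_def
    by (intro integrable_integral integrable_continuous_interval continuous_intros continuous_rise_fall)
  have iB: "(B has_integral integral {0..c} B) {0..c}"
    unfolding B_def using width_pos
    by (intro integrable_integral integrable_continuous_interval continuous_intros continuous_corner_bump)
  note iSum = has_integral_add[OF has_integral_mult_right[OF iR] has_integral_mult_right[OF iB]]
  have "integral {0..c} (\<lambda>t. (left_profile' t)\<^sup>2 + K * (left_profile t)\<^sup>2)
      \<le> integral {0..c} (\<lambda>t. 2 * lam\<^sup>2 * ((rise' t)\<^sup>2 + K * (rise t)\<^sup>2) + 2 * B t)"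
  proof (rule integral_le)
    show "(\<lambda>t. (left_profile' t)\<^sup>2 + K * (left_profile t)\<^sup>2) integrable_on {0..c}"
      using c_between by (intro integrable_continuous_interval continuous_intros continuous_left_profile'
          continuous_on_subset[OF continuous_left_profile]) auto
    show "(\<lambda>t. 2 * lam\<^sup>2 * ((rise' t)\<^sup>2 + K * (rise t)\<^sup>2) + 2 * B t) integrable_on {0..c}"
      using iSum by blast
  qed (simp only: B_def left_profile_energy_pointwise)
  also have "\<dots> = 2 * lam\<^sup>2 * rise_energy + 2 * integral {0..c} B"
    using iSum by (rule integral_unique)
  also have "integral {0..c} B \<le> (1 + K) * width"
    unfolding B_def using width_pos width_le c_between K(1) by (intro integral_corner_bump_le) auto
  finally show ?thesis by simp
qed

lemma second_variation_v_left:
  "second_variation 0 c v v'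
    \<le> (norm (uz c))\<^sup>2 * (- 2 * lam + 2 * lam\<^sup>2 * rise_energy + 2 * ((1 + K) * width))"
proof -
  let ?p = "uz c"
  let ?w = "\<lambda>t. - left_profile t *\<^sub>R ?p" and ?w' = "\<lambda>t. - left_profile' t *\<^sub>R ?p"
  have "second_variation 0 c v v' = second_variation 0 c (\<lambda>t. u t + ?w t) (\<lambda>t. uz t + ?w' t)"
    unfolding second_variation_def by (rule integral_cong) (simp add: v_def v'_def)
  also have "\<dots> = second_variation 0 c u uz + 2 * (uz c \<bullet> ?w c - uz 0 \<bullet> ?w 0) + second_variation 0 c ?w ?w'"
    by (rule second_variation_add_jacobi_field[OF jacobi_u smooth_left_correction]) (use c_between in auto)
  finally have split: "second_variation 0 c v v'
      = second_variation 0 c u uz + 2 * (uz c \<bullet> ?w c - uz 0 \<bullet> ?w 0) + second_variation 0 c ?w ?w'" .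
  have "second_variation 0 c u uz = 0"
    using second_variation_jacobi_field[OF jacobi_u, of 0 c] c_between u_zeros by simp
  moreover have "2 * (uz c \<bullet> ?w c - uz 0 \<bullet> ?w 0) = - 2 * lam * (norm ?p)\<^sup>2"
    by (simp add: left_profile_values power2_norm_eq_inner)
  moreover have "second_variation 0 c ?w ?w'
      \<le> (norm ?p)\<^sup>2 * integral {0..c} (\<lambda>t. (- left_profile' t)\<^sup>2 + K * (- left_profile t)\<^sup>2)"
  proof (rule second_variation_scaleR_le[OF K(2) smooth_left_correction,
        where \<phi>="\<lambda>t. - left_profile t" and \<phi>'="\<lambda>t. - left_profile' t"])
    show "{0..c} \<subseteq> {0..\<tau>}" using c_between by auto
    then show "(\<lambda>t. (- left_profile' t)\<^sup>2 + K * (- left_profile t)\<^sup>2) integrable_on {0..c}"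
      by (intro integrable_continuous_interval continuous_intros continuous_left_profile'
          continuous_on_subset[OF continuous_left_profile])
  next
    fix t
    show "?w t = (- left_profile t) *\<^sub>R ?p \<and> ?w' t = (- left_profile' t) *\<^sub>R ?p" by simp
  qed
  moreover have "(norm ?p)\<^sup>2 * integral {0..c} (\<lambda>t. (- left_profile' t)\<^sup>2 + K * (- left_profile t)\<^sup>2)
      \<le> (norm ?p)\<^sup>2 * (2 * lam\<^sup>2 * rise_energy + 2 * ((1 + K) * width))"
    using left_profile_energy_le by (intro mult_left_mono) auto
  ultimately show ?thesis using split by (simp add: algebra_simps)
qed

lemma second_variation_v_right: "second_variation c \<tau> v v' \<le> (norm (uz c))\<^sup>2 * (lam\<^sup>2 * fall_energy)"
proof -
  have "second_variation c \<tau> v v'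
      \<le> (norm (uz c))\<^sup>2 * integral {c..\<tau>} (\<lambda>t. (- (lam * fall' t))\<^sup>2 + K * (- (lam * fall t))\<^sup>2)"
  proof (rule second_variation_scaleR_le[OF K(2) smooth_v])
    show "{c..\<tau>} \<subseteq> {0..\<tau>}" using c_between by auto
    show "(\<lambda>t. (- (lam * fall' t))\<^sup>2 + K * (- (lam * fall t))\<^sup>2) integrable_on {c..\<tau>}"
      by (intro integrable_continuous_interval continuous_intros continuous_rise_fall)
  next
    fix t assume t: "t \<in> {c..\<tau>}"
    show "v t = - (lam * fall t) *\<^sub>R uz c \<and> v' t = - (lam * fall' t) *\<^sub>R uz c"
    proof (cases "t = c")
      case True
      then show ?thesis using u_zeros fall_values left_profile_values by (simp add: v_def v'_def)
    next
      case False
      then show ?thesis using t by (simp add: v_def v'_def)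
    qed
  qed
  also have "(\<lambda>t. (- (lam * fall' t))\<^sup>2 + K * (- (lam * fall t))\<^sup>2) = (\<lambda>t. lam\<^sup>2 * ((fall' t)\<^sup>2 + K * (fall t)\<^sup>2))"
    by (simp add: fun_eq_iff power_mult_distrib algebra_simps)
  finally show ?thesis by (simp add: fall_energy_def)
qed

lemma second_variation_v_negative: "second_variation 0 \<tau> v v' < 0"
proof -
  have "lam\<^sup>2 * (2 * rise_energy + fall_energy) \<le> lam"
    using mult_left_mono[OF lam_energy, of lam] lam_pos by (simp add: power2_eq_square algebra_simps)
  then have "- 2 * lam + 2 * lam\<^sup>2 * rise_energy + 2 * ((1 + K) * width) + lam\<^sup>2 * fall_energy < 0"
    using width_le(3) lam_pos by (simp add: algebra_simps)
  moreover have "(norm (uz c))\<^sup>2 > 0" using corner by simp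
  ultimately have "(norm (uz c))\<^sup>2 * (- 2 * lam + 2 * lam\<^sup>2 * rise_energy + 2 * ((1 + K) * width))
      + (norm (uz c))\<^sup>2 * (lam\<^sup>2 * fall_energy) < 0"
    by (simp add: mult_pos_neg distrib_left[symmetric])
  then show ?thesis
    using second_variation_combine[OF smooth_v, of c] c_between
      second_variation_v_left second_variation_v_right by simp
qed

end

context jacobi_system
begin

lemma negative_variation_from_conjugate_point:
  assumes "jacobi_field u uz" "u 0 = 0" "u c = 0" "0 < c" "c < \<tau>" "uz c \<noteq> 0"
  obtains v v' where "smooth_variation v v'" "v 0 = 0" "v \<tau> = 0" "\<exists>t\<in>{0..\<tau>}. v t \<noteq> 0"
    "second_variation 0 \<tau> v v' < 0"
proof -
  obtain K where "K \<ge> 0" "\<And>t x. t \<in> {0..\<tau>} \<Longrightarrow> x \<bullet> (H t *v x) \<le> K * (norm x)\<^sup>2"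
    using H_quadratic_bound by blast
  then interpret conjugate_corner \<tau> H u uz c K
    using assms by unfold_locales auto
  have "v c \<noteq> 0" using v_values(3) lam_pos corner by simp
  then show ?thesis
    using that[OF smooth_v v_values(1,2) _ second_variation_v_negative] c_between by force
qed


lemma null_variation_from_tangent_conjugate_point:
  assumes ju: "jacobi_field u uz" and u: "u 0 = 0" "u c = 0" "uz c = 0" and c: "0 < c" "c < \<tau>"
    and nz: "\<exists>t\<in>{0..c}. u t \<noteq> 0"
  obtains v v' where "smooth_variation v v'" "v 0 = 0" "v \<tau> = 0" "\<exists>t\<in>{0..\<tau>}. v t \<noteq> 0"
    "second_variation 0 \<tau> v v' = 0"
proof -
  define v where "v t = (if t \<le> c then u t else 0)" for t
  define v' where "v' t = (if t \<le> c then uz t else 0)" for t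
  have sub: "{0..c} \<subseteq> {0..\<tau>}" using c by auto
  have sv: "smooth_variation v v'"
    unfolding v_def[abs_def] v'_def[abs_def]
  proof (rule smooth_variation_glue)
    show "(u has_vderiv_on uz) {0..c}" "continuous_on {0..c} uz"
      using jacobi_field_smooth[OF ju] has_vderiv_on_subset[OF _ sub] continuous_on_subset[OF _ sub]
      unfolding smooth_variation_def by blast+
    show "((\<lambda>_. 0) has_vderiv_on (\<lambda>_. 0)) {c..\<tau>}" by (simp add: has_vderiv_on_def)
  qed (use u c in auto)
  have "second_variation 0 c v v' = second_variation 0 c u uz"
    unfolding second_variation_def by (rule integral_cong) (simp add: v_def v'_def)
  also have "\<dots> = 0" using second_variation_jacobi_field[OF ju] c u by simp
  moreover have "second_variation c \<tau> v v' = integral {c..\<tau>} (\<lambda>_. 0)"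
    unfolding second_variation_def by (rule integral_cong) (use u in \<open>auto simp: v_def v'_def\<close>)
  ultimately have "second_variation 0 \<tau> v v' = 0"
    using second_variation_combine[OF sv, of c] c by simp
  moreover have "v 0 = 0" "v \<tau> = 0" "\<exists>t\<in>{0..\<tau>}. v t \<noteq> 0"
    using u c nz by (auto simp: v_def)
  ultimately show ?thesis using that[OF sv] by blast
qed
end

context jacobi_frame
begin

lemma jacobi_condition_necessary:
  assumes pos: "\<And>v v'. smooth_variation v v' \<Longrightarrow> v 0 = 0 \<Longrightarrow> v \<tau> = 0 \<Longrightarrow>
      (\<exists>t\<in>{0..\<tau>}. v t \<noteq> 0) \<Longrightarrow> second_variation 0 \<tau> v v' > 0"
  shows "\<forall>t\<in>{0<..\<tau>}. det (Y t) \<noteq> 0"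
proof (rule ccontr)
  assume "\<not> (\<forall>t\<in>{0<..\<tau>}. det (Y t) \<noteq> 0)"
  then obtain c k where c: "0 < c" "c \<le> \<tau>" and k: "Y c *v k = 0" "k \<noteq> 0"
    using det_nonzero_iff_kernel_zero by fastforce
  define u where "u t = Y t *v k" for t
  define uz where "uz t = Z t *v k" for t
  have ju: "jacobi_field u uz" unfolding u_def[abs_def] uz_def[abs_def] by (rule frame_column)
  have u0: "u 0 = 0" and uz0: "uz 0 = k" and uc: "u c = 0"
    using frame_init k by (simp_all add: u_def uz_def)
  have nz: "\<exists>t\<in>{0..c}. u t \<noteq> 0"
    using jacobi_field_nonzero_near_0[OF ju u0 _ c] uz0 k by simp
  consider (endpoint) "c = \<tau>" | (tangent) "c < \<tau>" "uz c = 0" | (transversal) "c < \<tau>" "uz c \<noteq> 0"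
    using c by linarith
  then show False
  proof cases
    case endpoint
    have "second_variation 0 \<tau> u uz = 0"
      using second_variation_jacobi_field[OF ju] tau_pos u0 uc endpoint by simp
    then show False using pos[OF jacobi_field_smooth[OF ju] u0] uc nz endpoint by auto
  next
    case tangent
    with null_variation_from_tangent_conjugate_point[OF ju u0 uc _ c(1) _ nz] pos show False
      by (metis less_irrefl)
  next
    case transversal
    with negative_variation_from_conjugate_point[OF ju u0 uc c(1)] pos show False
      by (metis less_asym)
  qed
qed
end

section \<open>The boundary condition \<open>v(\<tau>) = R v(0)\<close>\<close>

locale jacobi_boundary_problem = jacobi_frame \<tau> H Y Z
    for \<tau> :: real and H Y Z :: "real \<Rightarrow> real^'n^'n" +
  fixes Y\<tau> Z\<tau> :: "real \<Rightarrow> real^'n^'n" and R :: "real^'n^'n"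
  assumes final_frame_jacobi: "matrix_jacobi Y\<tau> Z\<tau>"
    and final_frame_end: "Y\<tau> \<tau> = 0" "Z\<tau> \<tau> = - mat 1"
begin

definition boundary_matrix :: "real^'n^'n" where
  "boundary_matrix = - (Z\<tau> 0 ** matrix_inv (Y\<tau> 0)) - matrix_inv (Y \<tau>) ** R
     - transpose R ** transpose (matrix_inv (Y \<tau>)) + transpose R ** (Z \<tau> ** matrix_inv (Y \<tau>)) ** R"

text \<open>The Jacobi field with boundary values \<open>b\<close> and \<open>R b\<close> (when \<open>Y \<tau>\<close> is invertible).\<close>

definition boundary_field :: "real^'n \<Rightarrow> real \<Rightarrow> real^'n" where
  "boundary_field b t = Y t *v (matrix_inv (Y \<tau>) *v (R *v b)) + Y\<tau> t *v (matrix_inv (Y\<tau> 0) *v b)"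

definition boundary_field' :: "real^'n \<Rightarrow> real \<Rightarrow> real^'n" where
  "boundary_field' b t = Z t *v (matrix_inv (Y \<tau>) *v (R *v b)) + Z\<tau> t *v (matrix_inv (Y\<tau> 0) *v b)"

lemma final_frame_column: "jacobi_field (\<lambda>t. Y\<tau> t *v x) (\<lambda>t. Z\<tau> t *v x)"
  by (rule jacobi_field_matrix_column[OF final_frame_jacobi])

text \<open>The Wronskian of the two frames, evaluated at both ends.\<close>

lemma final_frame_start: "Y\<tau> 0 = transpose (Y \<tau>)"
proof -
  have "x \<bullet> (Y\<tau> 0 *v y) = x \<bullet> (transpose (Y \<tau>) *v y)" for x y
  proof -
    have "(Y \<tau> *v x) \<bullet> y = x \<bullet> (Y\<tau> 0 *v y)"
      using jacobi_field_wronskian[OF frame_column final_frame_column, of \<tau> x y] tau_pos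
        frame_init final_frame_end
      by (simp add: matrix_vector_mult_uminus)
    then show ?thesis by (simp only: inner_transpose_matrix_vector)
  qed
  then show ?thesis by (metis matrix_eq vector_eq_ldot)
qed

lemma jacobi_boundary_field: "jacobi_field (boundary_field b) (boundary_field' b)"
  unfolding boundary_field_def[abs_def] boundary_field'_def[abs_def]
  by (rule jacobi_field_add[OF frame_column final_frame_column])

lemma boundary_field_values:
  assumes "det (Y \<tau>) \<noteq> 0"
  shows "boundary_field b 0 = b" "boundary_field b \<tau> = R *v b"
proof -
  have "det (Y\<tau> 0) \<noteq> 0" using assms by (simp add: final_frame_start det_transpose)
  then show "boundary_field b 0 = b"
    using frame_init by (simp add: boundary_field_def matrix_inv_cancel)
  show "boundary_field b \<tau> = R *v b"
    using final_frame_end assms by (simp add: boundary_field_def matrix_inv_cancel)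
qed

lemma second_variation_boundary_field:
  assumes dY: "det (Y \<tau>) \<noteq> 0"
  shows "second_variation 0 \<tau> (boundary_field b) (boundary_field' b) = b \<bullet> (boundary_matrix *v b)"
proof -
  define c where "c = matrix_inv (Y \<tau>) *v (R *v b)"
  define d where "d = matrix_inv (Y\<tau> 0) *v b"
  have d_transpose: "d = transpose (matrix_inv (Y \<tau>)) *v b"
    using matrix_inv_transpose[OF dY] by (simp add: d_def final_frame_start)
  have "second_variation 0 \<tau> (boundary_field b) (boundary_field' b)
      = boundary_field' b \<tau> \<bullet> boundary_field b \<tau> - boundary_field' b 0 \<bullet> boundary_field b 0"
    using second_variation_jacobi_field[OF jacobi_boundary_field] tau_pos by simp
  also have "\<dots> = (Z \<tau> *v c - d) \<bullet> (R *v b) - (c + Z\<tau> 0 *v d) \<bullet> b"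
    using boundary_field_values[OF dY] frame_init final_frame_end
    by (simp add: boundary_field'_def matrix_vector_mult_uminus c_def d_def)
  also have "\<dots> = b \<bullet> (boundary_matrix *v b)"
  proof -
    have "boundary_matrix *v b = - (Z\<tau> 0 *v d) - c - transpose R *v d + transpose R *v (Z \<tau> *v c)"
      unfolding boundary_matrix_def
      by (simp only: matrix_vector_mult_add_rdistrib matrix_vector_mult_diff_rdistrib matrix_vector_mult_uminus
          matrix_vector_mul_assoc[symmetric] c_def[symmetric] d_def[symmetric] d_transpose[symmetric])
    then have "b \<bullet> (boundary_matrix *v b)
        = - (b \<bullet> (Z\<tau> 0 *v d)) - b \<bullet> c - (R *v b) \<bullet> d + (R *v b) \<bullet> (Z \<tau> *v c)"
      by (simp only: inner_diff_right inner_add_right inner_minus_right inner_transpose_matrix_vector)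
    then show ?thesis
      by (simp add: inner_diff_left inner_add_left inner_commute[of "Z \<tau> *v c" "R *v b"]
          inner_commute[of c b] inner_commute[of "Z\<tau> 0 *v d" b] inner_commute[of d "R *v b"])
  qed
  finally show ?thesis .
qed

lemma second_variation_decompose:
  assumes dY: "det (Y \<tau>) \<noteq> 0" and v: "smooth_variation v v'" and periodic: "v \<tau> = R *v v 0"
  defines "w \<equiv> \<lambda>t. v t - boundary_field (v 0) t" and "w' \<equiv> \<lambda>t. v' t - boundary_field' (v 0) t"
  shows "smooth_variation w w'" "w 0 = 0" "w \<tau> = 0"
    and "second_variation 0 \<tau> v v' = v 0 \<bullet> (boundary_matrix *v v 0) + second_variation 0 \<tau> w w'"
proof -
  have bf: "smooth_variation (boundary_field (v 0)) (boundary_field' (v 0))"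
    by (rule jacobi_field_smooth[OF jacobi_boundary_field])
  show sw: "smooth_variation w w'"
    using v bf unfolding smooth_variation_def w_def w'_def
    by (auto intro: has_vderiv_on_diff continuous_on_diff)
  show w0: "w 0 = 0" and wt: "w \<tau> = 0"
    using boundary_field_values[OF dY] periodic by (simp_all add: w_def)
  have "second_variation 0 \<tau> v v'
      = second_variation 0 \<tau> (\<lambda>t. boundary_field (v 0) t + w t) (\<lambda>t. boundary_field' (v 0) t + w' t)"
    by (simp add: w_def w'_def)
  also have "\<dots> = v 0 \<bullet> (boundary_matrix *v v 0) + second_variation 0 \<tau> w w'"
    using second_variation_add_jacobi_field[OF jacobi_boundary_field sw, of 0 \<tau>] tau_pos w0 wt
    by (simp add: second_variation_boundary_field[OF dY])
  finally show "second_variation 0 \<tau> v v' = v 0 \<bullet> (boundary_matrix *v v 0) + second_variation 0 \<tau> w w'" .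
qed

lemma jacobi_and_boundary_condition_necessary:
  assumes pos: "\<And>v v'. smooth_variation v v' \<Longrightarrow> v \<tau> = R *v v 0 \<Longrightarrow> \<exists>t\<in>{0..\<tau>}. v t \<noteq> 0 \<Longrightarrow>
      second_variation 0 \<tau> v v' > 0"
  shows "\<forall>t\<in>{0<..\<tau>}. det (Y t) \<noteq> 0" and "b \<noteq> 0 \<Longrightarrow> b \<bullet> (boundary_matrix *v b) > 0"
proof -
  show jacobi: "\<forall>t\<in>{0<..\<tau>}. det (Y t) \<noteq> 0"
    by (rule jacobi_condition_necessary) (simp add: pos)
  then have dY: "det (Y \<tau>) \<noteq> 0" using tau_pos by auto
  assume "b \<noteq> 0"
  then have "\<exists>t\<in>{0..\<tau>}. boundary_field b t \<noteq> 0"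
    using boundary_field_values[OF dY] tau_pos by (intro bexI[of _ 0]) auto
  then have "second_variation 0 \<tau> (boundary_field b) (boundary_field' b) > 0"
    using pos jacobi_field_smooth[OF jacobi_boundary_field] boundary_field_values[OF dY] by simp
  then show "b \<bullet> (boundary_matrix *v b) > 0" by (simp add: second_variation_boundary_field[OF dY])
qed

lemma second_variation_pos_if_jacobi_and_boundary_condition:
  assumes jacobi: "\<forall>t\<in>{0<..\<tau>}. det (Y t) \<noteq> 0"
    and boundary: "\<And>b. b \<noteq> 0 \<Longrightarrow> b \<bullet> (boundary_matrix *v b) > 0"
    and v: "smooth_variation v v'" "v \<tau> = R *v v 0" "\<exists>t\<in>{0..\<tau>}. v t \<noteq> 0"
  shows "second_variation 0 \<tau> v v' > 0"
proof -
  have dY: "det (Y \<tau>) \<noteq> 0" using jacobi tau_pos by auto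
  define w where "w t = v t - boundary_field (v 0) t" for t
  define w' where "w' t = v' t - boundary_field' (v 0) t" for t
  have decomp: "smooth_variation w w'" "w 0 = 0" "w \<tau> = 0"
    "second_variation 0 \<tau> v v' = v 0 \<bullet> (boundary_matrix *v v 0) + second_variation 0 \<tau> w w'"
    using second_variation_decompose[OF dY v(1,2)] unfolding w_def w'_def by auto
  note fixed = second_variation_fixed_ends[OF jacobi decomp(1-3)]
  show ?thesis
  proof (cases "v 0 = 0")
    case True
    then have "w = v" by (simp add: w_def boundary_field_def fun_eq_iff)
    then have "second_variation 0 \<tau> w w' > 0" using fixed(2) v(3) by simp
    then show ?thesis using decomp(4) True by simp
  next
    case False
    then show ?thesis using decomp(4) fixed(1) boundary[of "v 0"] by simp
  qed
qed

theorem second_variation_pos_iff: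
  "(\<forall>v v'. smooth_variation v v' \<and> v \<tau> = R *v v 0 \<and> (\<exists>t\<in>{0..\<tau>}. v t \<noteq> 0)
       \<longrightarrow> second_variation 0 \<tau> v v' > 0)
   \<longleftrightarrow> (\<forall>t\<in>{0<..\<tau>}. det (Y t) \<noteq> 0) \<and> (\<forall>b. b \<noteq> 0 \<longrightarrow> b \<bullet> (boundary_matrix *v b) > 0)"
  using jacobi_and_boundary_condition_necessary second_variation_pos_if_jacobi_and_boundary_condition
  by meson
end

lemma finite_nontrivial_if_card_ge_2:
  assumes "card G \<ge> 2"
  shows "finite G" "\<exists>x\<in>G. x \<noteq> a"
proof -
  show "finite G" using assms card.infinite by fastforce
  show "\<exists>x\<in>G. x \<noteq> a"
  proof (rule ccontr)
    assume "\<not> ?thesis"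
    then have "G \<subseteq> {a}" by auto
    then have "card G \<le> 1" using card_mono[of "{a}" G] by simp
    then show False using assms by simp
  qed
qed

theorem mainTheorem1:
  fixes N :: nat and G :: "(real^3^3) set" and Q T \<tau> :: real and M :: nat
    and R0 :: "real^3^3"
    and u0 u1 u2 :: "real \<Rightarrow> real^3"
    and H :: "real \<Rightarrow> real^3^3"
    and Y0 Z0 Y\<tau> Z\<tau> :: "real \<Rightarrow> real^3^3"
  assumes N: "N \<in> {12, 24, 60}"
    and G: "platonic_rotation_group G" "card G = N"
    and Q: "Q > 0"
    and T: "T > 0" and M: "M \<ge> 1" and tau: "\<tau> = T / real M"
    and R0: "R0 \<in> SO3"
    and u0_dom: "\<forall>t \<in> {0..\<tau>}. u0 t \<in> UNIV - rot_axes G"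
    and u0_d1: "\<forall>t \<in> {0..\<tau>}. (u0 has_vector_derivative u1 t) (at t within {0..\<tau>})"
    and u0_d2: "\<forall>t \<in> {0..\<tau>}. (u1 has_vector_derivative u2 t) (at t within {0..\<tau>})"
    and u0_C2: "continuous_on {0..\<tau>} u2"
    and EL: "\<forall>t \<in> {0..\<tau>}. u2 t = grad (potential G Q) (u0 t)"
    and H: "\<forall>t. H t = hessian (potential G Q) (u0 t)"
    and Y0: "\<forall>t \<in> {0..\<tau>}. (Y0 has_vector_derivative Z0 t) (at t within {0..\<tau>})"
    and Z0: "\<forall>t \<in> {0..\<tau>}. (Z0 has_vector_derivative (H t ** Y0 t)) (at t within {0..\<tau>})"
    and Y0_init: "Y0 0 = 0" and Z0_init: "Z0 0 = mat 1"
    and Y\<tau>: "\<forall>t \<in> {0..\<tau>}. (Y\<tau> has_vector_derivative Z\<tau> t) (at t within {0..\<tau>})"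
    and Z\<tau>: "\<forall>t \<in> {0..\<tau>}. (Z\<tau> has_vector_derivative (H t ** Y\<tau> t)) (at t within {0..\<tau>})"
    and Y\<tau>_fin: "Y\<tau> \<tau> = 0" and Z\<tau>_fin: "Z\<tau> \<tau> = - mat 1"
  shows "(\<forall>v v' :: real \<Rightarrow> real^3.
            (\<forall>t \<in> {0..\<tau>}. (v has_vector_derivative v' t) (at t within {0..\<tau>}))
            \<and> continuous_on {0..\<tau>} v'
            \<and> v \<tau> = R0 *v v 0
            \<and> (\<exists>t \<in> {0..\<tau>}. v t \<noteq> 0)
            \<longrightarrow> integral {0..\<tau>} (\<lambda>t. (norm (v' t))\<^sup>2 + v t \<bullet> (H t *v v t)) > 0)
         \<longleftrightarrow>
         ((\<forall>t \<in> {0<..\<tau>}. det (Y0 t) \<noteq> 0) \<and>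
          pos_def (- (Z\<tau> 0 ** matrix_inv (Y\<tau> 0))
                   - matrix_inv (Y0 \<tau>) ** R0
                   - transpose R0 ** transpose (matrix_inv (Y0 \<tau>))
                   + transpose R0 ** (Z0 \<tau> ** matrix_inv (Y0 \<tau>)) ** R0))"
proof -
  have tau_pos: "\<tau> > 0" using T M tau by simp
  have "card G \<ge> 2" using G(2) N by auto
  then have G_facts: "finite G" "\<exists>R\<in>G. R \<noteq> mat 1"
    by (rule finite_nontrivial_if_card_ge_2(1), rule finite_nontrivial_if_card_ge_2(2))
  have "continuous_on {0..\<tau>} u0"
    unfolding continuous_on_eq_continuous_within using u0_d1 has_vector_derivative_continuous by blast
  moreover have "H = (\<lambda>t. hessian (potential G Q) (u0 t))" using H by (simp add: fun_eq_iff)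
  ultimately interpret jacobi_system \<tau> H
    using jacobi_system_hessian_potential[OF tau_pos G_facts] u0_dom by simp
  have "matrix_jacobi Y0 Z0" "matrix_jacobi Y\<tau> Z\<tau>"
    using Y0 Z0 Y\<tau> Z\<tau> by (simp_all add: matrix_jacobi_def has_vderiv_on_def)
  then interpret jacobi_boundary_problem \<tau> H Y0 Z0 Y\<tau> Z\<tau> R0
    using Y0_init Z0_init Y\<tau>_fin Z\<tau>_fin by unfold_locales
  show ?thesis
    using second_variation_pos_iff
    unfolding smooth_variation_def has_vderiv_on_def second_variation_def boundary_matrix_def pos_def_def
      conj_assoc .
qed

end
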